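(* Let $K$ be a differential field which is a $C_1$-field (e.g. a finite extension of $\mathbb{C}(z)$). Let $M$ be an irreducible differential module over $K$ with $\dim M=3$ and $\det M=\mathbf{1}$. Then $M$ is isomorphic to $\mathrm{sym}^2N$ for some differential module $N$ with $\dim N=2$ and $\det N=\mathbf{1}$ if and only if $\mathrm{sym}^2M$ contains an element $F\neq 0$ with $\partial F=0$.
   Context: A differential module over $K$ is a finite-dimensional $K$-vector space with an additive map $\partial$ satisfying the Leibniz rule; $\mathrm{sym}^2M$ carries the induced derivation, $\det M=\Lambda^{\dim M}M$, and $\mathbf{1}$ is the trivial one-dimensional module. Irreducible means no nonzero proper $\partial$-invariant subspace. *)

theory Defs
  imports Main
begin

(* Differential field: the whole type 'a is the field K, d its derivation. *)
definition diff_field :: "('a::field \<Rightarrow> 'a) \<Rightarrow> bool" where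
  "diff_field d \<longleftrightarrow> (\<forall>x y. d (x + y) = d x + d y) \<and> (\<forall>x y. d (x * y) = d x * y + x * d y)"

(* A form is given by its coefficient function on the
   (finite) set of exponent vectors of total degree r in variables 0..m-1. *)
definition monomials :: "nat \<Rightarrow> nat \<Rightarrow> (nat \<Rightarrow> nat) set" where
  "monomials m r = {\<alpha>. (\<forall>i. m \<le> i \<longrightarrow> \<alpha> i = 0) \<and> (\<Sum>i<m. \<alpha> i) = r}"

definition form_eval :: "nat \<Rightarrow> nat \<Rightarrow> ((nat \<Rightarrow> nat) \<Rightarrow> 'a::comm_ring_1) \<Rightarrow> (nat \<Rightarrow> 'a) \<Rightarrow> 'a" where
  "form_eval m r c x = (\<Sum>\<alpha>\<in>monomials m r. c \<alpha> * (\<Prod>i<m. x i ^ \<alpha> i))"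

definition C1_field :: "'a::field itself \<Rightarrow> bool" where
  "C1_field _ \<longleftrightarrow> (\<forall>(m::nat) (r::nat) (c::(nat \<Rightarrow> nat) \<Rightarrow> 'a). 1 \<le> r \<and> r < m \<longrightarrow>
      (\<exists>x. (\<exists>i<m. x i \<noteq> 0) \<and> form_eval m r c x = 0))"

definition vzero :: "'i \<Rightarrow> 'a::zero" where "vzero = (\<lambda>_. 0)"
definition vadd :: "('i \<Rightarrow> 'a::plus) \<Rightarrow> ('i \<Rightarrow> 'a) \<Rightarrow> 'i \<Rightarrow> 'a" where
  "vadd u v = (\<lambda>x. u x + v x)"
definition vscale :: "'a::times \<Rightarrow> ('i \<Rightarrow> 'a) \<Rightarrow> 'i \<Rightarrow> 'a" where
  "vscale c v = (\<lambda>x. c * v x)"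
definition lincomb :: "(nat \<Rightarrow> 'a::comm_ring_1) \<Rightarrow> (nat \<Rightarrow> 'i \<Rightarrow> 'a) \<Rightarrow> nat \<Rightarrow> 'i \<Rightarrow> 'a" where
  "lincomb c b n = (\<lambda>x. \<Sum>k<n. c k * b k x)"

definition is_basis :: "('i \<Rightarrow> 'a::field) set \<Rightarrow> nat \<Rightarrow> (nat \<Rightarrow> 'i \<Rightarrow> 'a) \<Rightarrow> bool" where
  "is_basis V n b \<longleftrightarrow> (\<forall>c. lincomb c b n = vzero \<longrightarrow> (\<forall>k<n. c k = 0))
                      \<and> V = {lincomb c b n | c. True}"

definition has_dim :: "('i \<Rightarrow> 'a::field) set \<Rightarrow> nat \<Rightarrow> bool" where
  "has_dim V n \<longleftrightarrow> (\<exists>b. is_basis V n b)"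

definition subspace_of :: "('i \<Rightarrow> 'a::field) set \<Rightarrow> ('i \<Rightarrow> 'a) set \<Rightarrow> bool" where
  "subspace_of W V \<longleftrightarrow> W \<subseteq> V \<and> vzero \<in> W \<and> (\<forall>u\<in>W. \<forall>v\<in>W. vadd u v \<in> W)
                       \<and> (\<forall>c. \<forall>v\<in>W. vscale c v \<in> W)"

type_synonym ('i, 'a) dmodule = "('i \<Rightarrow> 'a) set \<times> (('i \<Rightarrow> 'a) \<Rightarrow> ('i \<Rightarrow> 'a))"

definition dmod :: "('a::field \<Rightarrow> 'a) \<Rightarrow> ('i, 'a) dmodule \<Rightarrow> bool" where
  "dmod d M \<longleftrightarrow> (\<exists>n. has_dim (fst M) n) \<and> (\<forall>x\<in>fst M. snd M x \<in> fst M)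
     \<and> (\<forall>x\<in>fst M. \<forall>y\<in>fst M. snd M (vadd x y) = vadd (snd M x) (snd M y))
     \<and> (\<forall>c. \<forall>x\<in>fst M. snd M (vscale c x) = vadd (vscale (d c) x) (vscale c (snd M x)))"

definition irreducible_dmod :: "('a::field \<Rightarrow> 'a) \<Rightarrow> ('i, 'a) dmodule \<Rightarrow> bool" where
  "irreducible_dmod d M \<longleftrightarrow> dmod d M \<and> fst M \<noteq> {vzero} \<and>
     (\<forall>W. subspace_of W (fst M) \<and> (\<forall>x\<in>W. snd M x \<in> W) \<longrightarrow> W = {vzero} \<or> W = fst M)"

definition dmod_iso :: "('i, 'a::field) dmodule \<Rightarrow> ('j, 'a) dmodule \<Rightarrow> bool" where
  "dmod_iso M N \<longleftrightarrow> (\<exists>f. bij_betw f (fst M) (fst N)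
     \<and> (\<forall>x\<in>fst M. \<forall>y\<in>fst M. f (vadd x y) = vadd (f x) (f y))
     \<and> (\<forall>c. \<forall>x\<in>fst M. f (vscale c x) = vscale c (f x))
     \<and> (\<forall>x\<in>fst M. f (snd M x) = snd N (f x)))"

definition mdim :: "('i \<Rightarrow> 'a::field) set \<Rightarrow> nat" where
  "mdim V = (SOME n. has_dim V n)"
definition cbasis :: "('i, 'a::field) dmodule \<Rightarrow> nat \<Rightarrow> 'i \<Rightarrow> 'a" where
  "cbasis M = (SOME b. is_basis (fst M) (mdim (fst M)) b)"
definition cmat :: "('i, 'a::field) dmodule \<Rightarrow> nat \<Rightarrow> nat \<Rightarrow> 'a" where
  "cmat M = (SOME a. \<forall>j<mdim (fst M).
      snd M (cbasis M j) = lincomb (\<lambda>i. a i j) (cbasis M) (mdim (fst M)))"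

definition triv_mod :: "('a::field \<Rightarrow> 'a) \<Rightarrow> (unit, 'a) dmodule" where
  "triv_mod d = (UNIV, \<lambda>v u. d (v u))"

(* det M = \<Lambda>^n M, written in the basis b_0 \<and> ... \<and> b_(n-1):
   D(f e) = (d f + tr(a) f) e. *)
definition det_mod :: "('a::field \<Rightarrow> 'a) \<Rightarrow> ('i, 'a) dmodule \<Rightarrow> (unit, 'a) dmodule" where
  "det_mod d M = (UNIV, \<lambda>v u. d (v u) + (\<Sum>i<mdim (fst M). cmat M i i) * v u)"

(* sym^2 M, realised (char 0) as symmetric tensors \<Sum> S(i,j) b_i \<otimes> b_j,
   i.e. symmetric n x n matrices S, with D S = d S + a S + S a^T. *)
definition sym2_mod :: "('a::field \<Rightarrow> 'a) \<Rightarrow> ('i, 'a) dmodule \<Rightarrow> (nat \<times> nat, 'a) dmodule" where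
  "sym2_mod d M = (let n = mdim (fst M); a = cmat M in
     ({S. \<forall>i j. S (i, j) = S (j, i) \<and> (n \<le> i \<longrightarrow> S (i, j) = 0)},
      \<lambda>S (i, j). if i < n \<and> j < n then
          d (S (i, j)) + (\<Sum>k<n. a i k * S (k, j)) + (\<Sum>k<n. S (i, k) * a j k)
        else 0))"

end

theory Submission
  imports Defs "HOL-Library.Function_Algebras" HOL.Vector_Spaces
begin

text \<open>
  If M is sym2 N with det N trivial, the determinant of symmetric 2 \<times> 2 matrices is an invariant
  quadratic form on sym2 N, i.e. a nonzero horizontal element of sym2 M.

  Conversely, a nonzero horizontal F in sym2 M is a symmetric form on the dual whose image is a
  submodule, so by irreducibility it is nondegenerate; multiplied by the square of a horizontal
  section of det M, its determinant is constant. Over a C1 field the form has an isotropic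
  vector, so there is a basis in which F is a constant multiple of 2 x0 x2 - x1^2/2. The
  connection matrix then lies in so(3) = sym2(sl(2)), and M is sym2 of the 2-dimensional module
  with the corresponding traceless connection matrix, whose determinant is trivial.
\<close>

section \<open>Derivations\<close>

locale derivation =
  fixes d :: "'a::field \<Rightarrow> 'a"
  assumes diff_field: "diff_field d"
begin

lemma d_add: "d (x + y) = d x + d y"
  using diff_field by (simp add: diff_field_def)

lemma d_mult: "d (x * y) = d x * y + x * d y"
  using diff_field by (simp add: diff_field_def)

lemma d_zero: "d 0 = 0"
  using d_mult[of 0 0] by simp

lemma d_one: "d 1 = 0"
proof -
  have "d 1 = d 1 + d 1" using d_mult[of 1 1] by simp
  thus ?thesis by (metis add_cancel_left_right)
qed

lemma d_minus: "d (- x) = - d x"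
  using d_add[of x "- x"] d_zero by (simp add: add_eq_0_iff)

lemma d_diff: "d (x - y) = d x - d y"
  using d_add[of x "- y"] d_minus[of y] by simp

lemma d_sum: "d (sum f A) = (\<Sum>i\<in>A. d (f i))"
  by (induction A rule: infinite_finite_induct) (auto simp: d_zero d_add)

lemma d_of_nat: "d (of_nat n) = 0"
  by (induction n) (auto simp: d_zero d_one d_add)

lemma d_numeral: "d (numeral n) = 0"
  using d_of_nat[of "numeral n"] by simp

lemma d_inverse: "d (inverse x) = - d x / x\<^sup>2"
proof (cases "x = 0")
  case False
  have "d (x * inverse x) = 0" using False by (simp add: d_one)
  hence "x * d (inverse x) = - d x * inverse x"
    unfolding d_mult by (simp add: eq_neg_iff_add_eq_0 add.commute)
  hence "d (inverse x) = inverse x * (- d x * inverse x)"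
    using False by (metis mult.assoc mult_1_left left_inverse)
  thus ?thesis by (simp add: power2_eq_square field_simps)
qed (simp add: d_zero)

lemma d_divide_numeral: "d (x / numeral n) = d x / numeral n"
proof -
  have "d (inverse (numeral n :: 'a)) = 0" by (simp only: d_inverse d_numeral) simp
  thus ?thesis by (simp only: divide_inverse d_mult) simp
qed

lemmas d_simps = d_add d_mult d_zero d_one d_minus d_diff d_sum d_of_nat d_numeral

end

section \<open>Matrices\<close>

text \<open>An n \<times> n matrix is a function nat \<Rightarrow> nat \<Rightarrow> 'a; the operations indexed by n only read the
  entries in {..<n} \<times> {..<n} and return functions vanishing outside it.\<close>

type_synonym 'a mat = "nat \<Rightarrow> nat \<Rightarrow> 'a"

definition mat_trunc :: "nat \<Rightarrow> 'a::zero mat \<Rightarrow> 'a mat" where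
  "mat_trunc n A = (\<lambda>i j. if i < n \<and> j < n then A i j else 0)"

definition mat_mult :: "nat \<Rightarrow> 'a::comm_ring_1 mat \<Rightarrow> 'a mat \<Rightarrow> 'a mat" where
  "mat_mult n A B = (\<lambda>i j. if i < n \<and> j < n then \<Sum>k<n. A i k * B k j else 0)"

definition mat_transpose :: "'a mat \<Rightarrow> 'a mat" where
  "mat_transpose A = (\<lambda>i j. A j i)"

definition mat_one :: "nat \<Rightarrow> 'a::{zero,one} mat" where
  "mat_one n = (\<lambda>i j. if i < n \<and> j < n \<and> i = j then 1 else 0)"

definition mat_scale :: "'a::comm_ring_1 \<Rightarrow> 'a mat \<Rightarrow> 'a mat" where
  "mat_scale c A = (\<lambda>i j. c * A i j)"

definition mat_deriv :: "('a::zero \<Rightarrow> 'a) \<Rightarrow> nat \<Rightarrow> 'a mat \<Rightarrow> 'a mat" where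
  "mat_deriv d n A = (\<lambda>i j. if i < n \<and> j < n then d (A i j) else 0)"

definition mat_trace :: "nat \<Rightarrow> 'a::comm_ring_1 mat \<Rightarrow> 'a" where
  "mat_trace n A = (\<Sum>i<n. A i i)"

lemma mat_mult_assoc: "mat_mult n (mat_mult n A B) C = mat_mult n A (mat_mult n B C)"
proof -
  have "(\<Sum>k<n. (\<Sum>l<n. A i l * B l k) * C k j) = (\<Sum>l<n. A i l * (\<Sum>k<n. B l k * C k j))" for i j
    by (simp add: sum_distrib_left sum_distrib_right mult.assoc) (rule sum.swap)
  thus ?thesis by (auto simp: mat_mult_def fun_eq_iff intro!: sum.cong)
qed

lemma mat_mult_trunc_left [simp]: "mat_mult n (mat_trunc n A) B = mat_mult n A B"
  by (auto simp: mat_mult_def mat_trunc_def fun_eq_iff intro!: sum.cong)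

lemma mat_mult_trunc_right [simp]: "mat_mult n A (mat_trunc n B) = mat_mult n A B"
  by (auto simp: mat_mult_def mat_trunc_def fun_eq_iff intro!: sum.cong)

lemma mat_trunc_mult [simp]: "mat_trunc n (mat_mult n A B) = mat_mult n A B"
  by (auto simp: mat_mult_def mat_trunc_def fun_eq_iff)

lemma mat_trunc_deriv [simp]: "mat_trunc n (mat_deriv d n A) = mat_deriv d n A"
  by (auto simp: mat_deriv_def mat_trunc_def fun_eq_iff)

lemma mat_deriv_trunc [simp]: "mat_deriv d n (mat_trunc n A) = mat_deriv d n A"
  by (auto simp: mat_deriv_def mat_trunc_def fun_eq_iff)

lemma mat_trunc_diff:
  "mat_trunc n (A - B) = mat_trunc n A - mat_trunc n (B :: 'a::ab_group_add mat)"
  by (auto simp: mat_trunc_def fun_eq_iff)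

lemma mat_mult_one_left [simp]: "mat_mult n (mat_one n) A = mat_trunc n A"
  by (simp add: mat_mult_def mat_one_def mat_trunc_def fun_eq_iff if_distrib[of "\<lambda>x. x * _"]
      sum.delta cong: if_cong)

lemma mat_mult_one_right [simp]: "mat_mult n A (mat_one n) = mat_trunc n A"
  by (simp add: mat_mult_def mat_one_def mat_trunc_def fun_eq_iff if_distrib[of "\<lambda>x. _ * x"]
      sum.delta' cong: if_cong)

lemma mat_mult_add_left: "mat_mult n (A + B) C = mat_mult n A C + mat_mult n B C"
  by (auto simp: mat_mult_def fun_eq_iff distrib_right sum.distrib)

lemma mat_mult_add_right: "mat_mult n A (B + C) = mat_mult n A B + mat_mult n A C"
  by (auto simp: mat_mult_def fun_eq_iff distrib_left sum.distrib)

lemma mat_mult_diff_left: "mat_mult n (A - B) C = mat_mult n A C - mat_mult n B C"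
  by (auto simp: mat_mult_def fun_eq_iff left_diff_distrib sum_subtractf)

lemma mat_mult_diff_right: "mat_mult n A (B - C) = mat_mult n A B - mat_mult n A C"
  by (auto simp: mat_mult_def fun_eq_iff right_diff_distrib sum_subtractf)

lemma mat_mult_minus_left: "mat_mult n (- A) C = - mat_mult n A C"
  by (auto simp: mat_mult_def fun_eq_iff sum_negf)

lemma mat_mult_minus_right: "mat_mult n A (- C) = - mat_mult n A C"
  by (auto simp: mat_mult_def fun_eq_iff sum_negf)

lemma mat_mult_zero_left [simp]: "mat_mult n 0 C = 0"
  by (auto simp: mat_mult_def fun_eq_iff)

lemma mat_mult_zero_right [simp]: "mat_mult n C 0 = 0"
  by (auto simp: mat_mult_def fun_eq_iff)

lemma mat_mult_scale_left: "mat_mult n (mat_scale c A) B = mat_scale c (mat_mult n A B)"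
  by (auto simp: mat_mult_def mat_scale_def fun_eq_iff sum_distrib_left mult.assoc)

lemma mat_mult_scale_right: "mat_mult n A (mat_scale c B) = mat_scale c (mat_mult n A B)"
  by (auto simp: mat_mult_def mat_scale_def fun_eq_iff sum_distrib_left mult.left_commute)

lemma mat_scale_scale: "mat_scale c (mat_scale e A) = mat_scale (c * e) A"
  by (simp add: mat_scale_def mult.assoc fun_eq_iff)

lemma mat_scale_one [simp]: "mat_scale 1 A = A"
  by (simp add: mat_scale_def fun_eq_iff)

lemma mat_transpose_mult:
  "mat_transpose (mat_mult n A B) = mat_mult n (mat_transpose B) (mat_transpose A)"
  by (auto simp: mat_mult_def mat_transpose_def fun_eq_iff mult.commute)

lemma mat_transpose_transpose [simp]: "mat_transpose (mat_transpose A) = A"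
  by (simp add: mat_transpose_def)

lemma mat_transpose_diff: "mat_transpose (A - B) = mat_transpose A - mat_transpose B"
  by (simp add: mat_transpose_def fun_eq_iff)

lemma mat_transpose_one: "mat_transpose (mat_one n) = mat_one n"
  by (auto simp: mat_transpose_def mat_one_def fun_eq_iff)

lemma mat_transpose_deriv: "mat_transpose (mat_deriv d n A) = mat_deriv d n (mat_transpose A)"
  by (auto simp: mat_transpose_def mat_deriv_def fun_eq_iff)

lemmas mat_mult_simps = mat_mult_add_left mat_mult_add_right mat_mult_diff_left mat_mult_diff_right
  mat_mult_minus_right mat_mult_assoc mat_transpose_mult mat_transpose_diff

lemma mat_congruence_transpose:
  "mat_transpose (mat_mult n (mat_mult n Q U) (mat_transpose Q))
     = mat_mult n (mat_mult n Q (mat_transpose U)) (mat_transpose Q)"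
  by (simp add: mat_transpose_mult mat_mult_assoc)

lemma mat_congruence_inverse:
  assumes "mat_mult n P Q = mat_one n"
  shows "mat_mult n (mat_mult n P (mat_mult n (mat_mult n Q U) (mat_transpose Q))) (mat_transpose P)
           = mat_trunc n U"
proof -
  have "mat_mult n (mat_transpose Q) (mat_transpose P) = mat_one n"
    using assms by (simp flip: mat_transpose_mult add: mat_transpose_one)
  hence "mat_mult n (mat_mult n P (mat_mult n (mat_mult n Q U) (mat_transpose Q))) (mat_transpose P)
           = mat_mult n (mat_mult n P Q) U"
    by (simp add: mat_mult_assoc)
  thus ?thesis using assms by simp
qed

definition sym2_deriv :: "('a::comm_ring_1 \<Rightarrow> 'a) \<Rightarrow> nat \<Rightarrow> 'a mat \<Rightarrow> 'a mat \<Rightarrow> 'a mat" where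
  "sym2_deriv d n a S = mat_deriv d n S + mat_mult n a S + mat_mult n S (mat_transpose a)"

lemma sym2_deriv_trunc [simp]: "sym2_deriv d n a (mat_trunc n S) = sym2_deriv d n a S"
  by (simp add: sym2_deriv_def)

text \<open>gauge d n Q a b: the matrix Q carries the operator c \<mapsto> c' + a c on coordinate vectors to
  u \<mapsto> u' + b u, i.e. Q changes coordinates from a basis with connection matrix a to one with
  connection matrix b.\<close>

definition gauge :: "('a::comm_ring_1 \<Rightarrow> 'a) \<Rightarrow> nat \<Rightarrow> 'a mat \<Rightarrow> 'a mat \<Rightarrow> 'a mat \<Rightarrow> bool" where
  "gauge d n Q a b \<longleftrightarrow> mat_mult n Q a = mat_mult n b Q + mat_deriv d n Q"

context derivation
begin

lemma mat_deriv_mult: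
  "mat_deriv d n (mat_mult n A B) = mat_mult n (mat_deriv d n A) B + mat_mult n A (mat_deriv d n B)"
  by (auto simp: mat_deriv_def mat_mult_def fun_eq_iff d_simps sum.distrib intro!: sum.cong)

lemma mat_deriv_one: "mat_deriv d n (mat_one n) = 0"
  by (auto simp: mat_deriv_def mat_one_def fun_eq_iff d_simps)

lemma sym2_deriv_gauge:
  assumes "gauge d n Q a b"
  shows "sym2_deriv d n b (mat_mult n (mat_mult n Q S) (mat_transpose Q))
           = mat_mult n (mat_mult n Q (sym2_deriv d n a S)) (mat_transpose Q)"
proof -
  have dQ: "mat_deriv d n Q = mat_mult n Q a - mat_mult n b Q"
    using assms by (simp add: gauge_def)
  hence dQt: "mat_deriv d n (mat_transpose Q)
           = mat_mult n (mat_transpose a) (mat_transpose Q)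
             - mat_mult n (mat_transpose Q) (mat_transpose b)"
    by (metis mat_transpose_deriv mat_transpose_diff mat_transpose_mult)
  show ?thesis
    unfolding sym2_deriv_def by (simp add: mat_deriv_mult dQ dQt mat_mult_simps algebra_simps)
qed

lemma gauge_inverse:
  assumes PQ: "mat_mult n P Q = mat_one n" and QP: "mat_mult n Q P = mat_one n"
    and "gauge d n P b a"
  shows "gauge d n Q a b"
proof -
  have rel: "mat_mult n P b = mat_mult n a P + mat_deriv d n P"
    using assms(3) by (simp add: gauge_def)
  have "mat_mult n (mat_deriv d n P) Q = - mat_mult n P (mat_deriv d n Q)"
    using arg_cong[OF PQ, of "mat_deriv d n"]
    by (simp add: mat_deriv_mult mat_deriv_one eq_neg_iff_add_eq_0)
  hence dPQ: "mat_mult n Q (mat_mult n (mat_deriv d n P) Q) = - mat_deriv d n Q"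
    by (simp add: mat_mult_minus_right QP flip: mat_mult_assoc)
  have "mat_mult n b Q = mat_mult n (mat_mult n (mat_mult n Q P) b) Q"
    using QP by simp
  also have "\<dots> = mat_mult n Q (mat_mult n (mat_mult n P b) Q)"
    by (simp add: mat_mult_assoc)
  also have "\<dots> = mat_mult n Q a - mat_deriv d n Q"
    by (simp add: rel mat_mult_simps PQ dPQ)
  finally show ?thesis by (simp add: gauge_def)
qed

lemma gauge_transform:
  assumes "mat_mult n P Q = mat_one n"
  shows "gauge d n Q a (mat_mult n (mat_mult n Q a - mat_deriv d n Q) P)"
  using assms by (simp add: gauge_def mat_mult_assoc mat_trunc_diff)

end

lemma sum_lessThan_2: "(\<Sum>k<2. f k) = f 0 + f (1::nat)"
  by (simp add: numeral_2_eq_2 lessThan_Suc add.commute)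

lemma sum_lessThan_3: "(\<Sum>k<3. f k) = f 0 + f 1 + f (2::nat)"
  by (simp add: numeral_3_eq_3 lessThan_Suc numeral_2_eq_2 add_ac)

lemma prod_lessThan_3: "(\<Prod>k<3. f k) = f 0 * f 1 * f (2::nat)"
  by (simp add: numeral_3_eq_3 lessThan_Suc numeral_2_eq_2 mult_ac)

lemma less_3_cases: "i < (3::nat) \<Longrightarrow> i = 0 \<or> i = 1 \<or> i = 2"
  by auto

lemma less_3_pair_cases:
  assumes "i < (3::nat)" "j < (3::nat)"
  obtains "i = 0" "j = 0" | "i = 0" "j = 1" | "i = 0" "j = 2" | "i = 1" "j = 0" | "i = 1" "j = 1"
    | "i = 1" "j = 2" | "i = 2" "j = 0" | "i = 2" "j = 1" | "i = 2" "j = 2"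
  using assms by (metis less_3_cases)

lemma less_2_pair_cases:
  assumes "i < (2::nat)" "j < (2::nat)"
  obtains "i = 0" "j = 0" | "i = 0" "j = 1" | "i = 1" "j = 0" | "i = 1" "j = 1"
  using assms by fastforce

lemma mat_mult_2:
  "mat_mult 2 A B i j = (if i < 2 \<and> j < 2 then A i 0 * B 0 j + A i 1 * B 1 j else 0)"
  by (simp add: mat_mult_def sum_lessThan_2)

lemma mat_mult_3: "mat_mult 3 A B i j
    = (if i < 3 \<and> j < 3 then A i 0 * B 0 j + A i 1 * B 1 j + A i 2 * B 2 j else 0)"
  by (simp add: mat_mult_def sum_lessThan_3)

lemma mat_trace_2: "mat_trace 2 A = A 0 0 + A 1 1"
  by (simp add: mat_trace_def sum_lessThan_2)

lemma mat_trace_3: "mat_trace 3 A = A 0 0 + A 1 1 + A 2 2"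
  by (simp add: mat_trace_def sum_lessThan_3)

definition det2 :: "'a::comm_ring_1 mat \<Rightarrow> 'a" where
  "det2 A = A 0 0 * A 1 1 - A 0 1 * A 1 0"

definition det3 :: "'a::comm_ring_1 mat \<Rightarrow> 'a" where
  "det3 A = A 0 0 * A 1 1 * A 2 2 + A 0 1 * A 1 2 * A 2 0 + A 0 2 * A 1 0 * A 2 1
          - A 0 2 * A 1 1 * A 2 0 - A 0 1 * A 1 0 * A 2 2 - A 0 0 * A 1 2 * A 2 1"

definition adj3 :: "'a::comm_ring_1 mat \<Rightarrow> 'a mat" where
  "adj3 A = mat_trunc 3 (\<lambda>i j.
     if i = 0 \<and> j = 0 then A 1 1 * A 2 2 - A 1 2 * A 2 1
     else if i = 0 \<and> j = 1 then A 0 2 * A 2 1 - A 0 1 * A 2 2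
     else if i = 0 \<and> j = 2 then A 0 1 * A 1 2 - A 0 2 * A 1 1
     else if i = 1 \<and> j = 0 then A 1 2 * A 2 0 - A 1 0 * A 2 2
     else if i = 1 \<and> j = 1 then A 0 0 * A 2 2 - A 0 2 * A 2 0
     else if i = 1 \<and> j = 2 then A 0 2 * A 1 0 - A 0 0 * A 1 2
     else if i = 2 \<and> j = 0 then A 1 0 * A 2 1 - A 1 1 * A 2 0
     else if i = 2 \<and> j = 1 then A 0 1 * A 2 0 - A 0 0 * A 2 1
     else A 0 0 * A 1 1 - A 0 1 * A 1 0)"

lemma det2_mult: "det2 (mat_mult 2 A B) = det2 A * det2 B"
  unfolding det2_def mat_mult_2 by (simp add: algebra_simps)

lemma det2_one [simp]: "det2 (mat_one 2) = 1"
  by (simp add: det2_def mat_one_def)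

lemma det3_mult: "det3 (mat_mult 3 A B) = det3 A * det3 B"
  unfolding det3_def mat_mult_3 by (simp add: algebra_simps)

lemma det3_one [simp]: "det3 (mat_one 3) = 1"
  by (simp add: det3_def mat_one_def)

lemma det3_transpose: "det3 (mat_transpose A) = det3 A"
  by (simp add: det3_def mat_transpose_def algebra_simps)

lemma adj3_mult: "mat_mult 3 (adj3 A) A = mat_scale (det3 A) (mat_one 3)"
proof (intro ext)
  fix i j
  show "mat_mult 3 (adj3 A) A i j = mat_scale (det3 A) (mat_one 3) i j"
  proof (cases "i < 3 \<and> j < 3")
    case True
    then have "i < 3" "j < 3" by auto
    then show ?thesis
      by (cases rule: less_3_pair_cases)
        (simp_all add: mat_mult_3 adj3_def mat_trunc_def mat_scale_def mat_one_def det3_def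
          algebra_simps)
  qed (auto simp: mat_mult_3 mat_scale_def mat_one_def)
qed

lemma mat_trunc_adj3 [simp]: "mat_trunc 3 (adj3 A) = adj3 A"
  by (auto simp: adj3_def mat_trunc_def fun_eq_iff)

lemma det3_nonzero_of_right_inverse:
  "mat_mult 3 A B = mat_one 3 \<Longrightarrow> det3 (A :: 'a::field mat) \<noteq> 0"
  using det3_mult[of A B] by auto

lemma mat3_left_inverse_of_right_inverse:
  fixes A B :: "'a::field mat"
  assumes AB: "mat_mult 3 A B = mat_one 3"
  shows "mat_mult 3 B A = mat_one 3"
proof -
  have nz: "det3 A \<noteq> 0" using det3_nonzero_of_right_inverse[OF AB] .
  have "adj3 A = mat_mult 3 (adj3 A) (mat_mult 3 A B)" using AB by simp
  also have "\<dots> = mat_scale (det3 A) (mat_trunc 3 B)"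
    by (simp add: adj3_mult mat_mult_scale_left flip: mat_mult_assoc)
  finally have B: "mat_trunc 3 B = mat_scale (inverse (det3 A)) (adj3 A)"
    using nz by (simp add: mat_scale_scale)
  have "mat_mult 3 B A = mat_mult 3 (mat_trunc 3 B) A" by simp
  also have "\<dots> = mat_one 3"
    unfolding B using nz by (simp add: mat_mult_scale_left adj3_mult mat_scale_scale)
  finally show ?thesis .
qed

lemma mat3_invertible_of_det:
  fixes A :: "'a::field mat"
  assumes "det3 A \<noteq> 0"
  obtains B where "mat_mult 3 A B = mat_one 3" "mat_mult 3 B A = mat_one 3"
proof -
  define B where "B = mat_scale (inverse (det3 A)) (adj3 A)"
  have "mat_mult 3 B A = mat_one 3"
    using assms by (simp add: B_def mat_mult_scale_left adj3_mult mat_scale_scale)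
  with mat3_left_inverse_of_right_inverse[OF this] that show ?thesis by blast
qed

context derivation
begin

lemma d_det2:
  assumes "mat_deriv d 2 A = mat_mult 2 L A + mat_mult 2 A R"
  shows "d (det2 A) = (mat_trace 2 L + mat_trace 2 R) * det2 A"
proof -
  have dA: "d (A i j) = (L i 0 * A 0 j + L i 1 * A 1 j) + (A i 0 * R 0 j + A i 1 * R 1 j)"
    if "i < 2" "j < 2" for i j
    using fun_cong[OF fun_cong[OF assms, of i], of j] that
    by (simp add: mat_deriv_def mat_mult_2)
  show ?thesis unfolding det2_def mat_trace_2 by (simp add: d_simps dA algebra_simps)
qed

lemma horizontal_entry:
  assumes "sym2_deriv d 3 a S = 0" "i < 3" "j < 3"
  shows "d (S i j) = - (a i 0 * S 0 j + a i 1 * S 1 j + a i 2 * S 2 j)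
                    - (S i 0 * a j 0 + S i 1 * a j 1 + S i 2 * a j 2)"
proof -
  have "d (S i j) + ((a i 0 * S 0 j + a i 1 * S 1 j + a i 2 * S 2 j)
                  + (S i 0 * a j 0 + S i 1 * a j 1 + S i 2 * a j 2)) = 0"
    using fun_cong[OF fun_cong[OF assms(1), of i], of j] assms(2,3)
    by (simp add: sym2_deriv_def mat_deriv_def mat_mult_3 mat_transpose_def add.assoc)
  hence "d (S i j) = - ((a i 0 * S 0 j + a i 1 * S 1 j + a i 2 * S 2 j)
                  + (S i 0 * a j 0 + S i 1 * a j 1 + S i 2 * a j 2))"
    by (simp only: eq_neg_iff_add_eq_0)
  thus ?thesis by simp
qed

lemma d_det3_horizontal:
  assumes "sym2_deriv d 3 a S = 0"
  shows "d (det3 S) = - 2 * mat_trace 3 a * det3 S"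
  unfolding det3_def mat_trace_3 by (simp add: d_simps horizontal_entry[OF assms] algebra_simps)

end

section \<open>Coordinates with respect to a basis\<close>

lemma vzero_eq_zero: "vzero = 0"
  by (simp add: vzero_def fun_eq_iff)

lemma sum_fun_apply: "(sum f A) x = (\<Sum>a\<in>A. f a x)"
  by (induction A rule: infinite_finite_induct) auto

lemma lincomb_eq_sum: "lincomb c b n = (\<Sum>k<n. vscale (c k) (b k))"
  by (simp add: lincomb_def vscale_def fun_eq_iff sum_fun_apply)

lemma lincomb_cong: "(\<And>k. k < n \<Longrightarrow> c k = e k) \<Longrightarrow> lincomb c b n = lincomb e b n"
  by (simp add: lincomb_def)

lemma lincomb_add: "lincomb (\<lambda>k. c k + e k) b n = vadd (lincomb c b n) (lincomb e b n)"
  by (simp add: lincomb_def vadd_def distrib_right sum.distrib)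

lemma lincomb_diff: "lincomb (\<lambda>k. c k - e k) b n = lincomb c b n - lincomb e b n"
  by (simp add: lincomb_def fun_eq_iff left_diff_distrib sum_subtractf)

lemma lincomb_scale: "lincomb (\<lambda>k. s * c k) b n = vscale s (lincomb c b n)"
  by (simp add: lincomb_def vscale_def sum_distrib_left mult.assoc)

lemma lincomb_zero: "lincomb (\<lambda>_. 0) b n = vzero"
  by (simp add: lincomb_def vzero_def)

lemma lincomb_delta: "k < n \<Longrightarrow> lincomb (\<lambda>i. if i = k then 1 else 0) b n = b k"
  by (simp add: lincomb_def if_distrib[of "\<lambda>x. x * _"] cong: if_cong)

lemma lincomb_lincomb:
  assumes "\<And>j. j < n \<Longrightarrow> e j = lincomb (\<lambda>i. P i j) b n"
  shows "lincomb c e n = lincomb (\<lambda>i. \<Sum>j<n. P i j * c j) b n"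
proof -
  have "(\<Sum>j<n. c j * e j x) = (\<Sum>j<n. c j * (\<Sum>i<n. P i j * b i x))" for x
    by (intro sum.cong) (simp_all add: assms lincomb_def)
  also have "\<dots> x = (\<Sum>j<n. \<Sum>i<n. P i j * c j * b i x)" for x
    by (simp add: sum_distrib_left mult_ac)
  also have "\<dots> x = (\<Sum>i<n. \<Sum>j<n. P i j * c j * b i x)" for x
    by (rule sum.swap)
  also have "\<dots> x = (\<Sum>i<n. (\<Sum>j<n. P i j * c j) * b i x)" for x
    by (simp add: sum_distrib_right)
  finally show ?thesis by (simp add: lincomb_def)
qed

lemma lincomb_3:
  "lincomb c b 3 = vadd (vadd (vscale (c 0) (b 0)) (vscale (c 1) (b 1))) (vscale (c 2) (b 2))"
  by (simp add: lincomb_def sum_lessThan_3 vadd_def vscale_def)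

definition coords :: "nat \<Rightarrow> (nat \<Rightarrow> 'i \<Rightarrow> 'a::comm_ring_1) \<Rightarrow> ('i \<Rightarrow> 'a) \<Rightarrow> nat \<Rightarrow> 'a" where
  "coords n b x = (SOME c. x = lincomb c b n)"

locale basis_of =
  fixes V :: "('i \<Rightarrow> 'a::field) set" and n :: nat and b :: "nat \<Rightarrow> 'i \<Rightarrow> 'a"
  assumes is_basis: "is_basis V n b"
begin

lemma lincomb_in: "lincomb c b n \<in> V"
  using is_basis by (auto simp: is_basis_def)

lemma basis_in: "k < n \<Longrightarrow> b k \<in> V"
  using lincomb_in[of "\<lambda>i. if i = k then 1 else 0"] by (simp add: lincomb_delta)

lemma lincomb_eq_zero: "lincomb c b n = 0 \<Longrightarrow> k < n \<Longrightarrow> c k = 0"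
  using is_basis by (auto simp: is_basis_def vzero_eq_zero)

lemma lincomb_inj: "lincomb c b n = lincomb e b n \<Longrightarrow> k < n \<Longrightarrow> c k = e k"
  using lincomb_eq_zero[of "\<lambda>k. c k - e k" k] by (simp add: lincomb_diff)

lemma lincomb_coords: "x \<in> V \<Longrightarrow> lincomb (coords n b x) b n = x"
proof -
  assume "x \<in> V"
  hence "\<exists>c. x = lincomb c b n" using is_basis by (auto simp: is_basis_def)
  from someI_ex[OF this] show ?thesis by (simp add: coords_def)
qed

lemma coords_lincomb: "k < n \<Longrightarrow> coords n b (lincomb c b n) k = c k"
  by (rule lincomb_inj[OF lincomb_coords[OF lincomb_in]])

lemma vadd_in: "x \<in> V \<Longrightarrow> y \<in> V \<Longrightarrow> vadd x y \<in> V"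
  by (metis lincomb_add lincomb_coords lincomb_in)

lemma vscale_in: "x \<in> V \<Longrightarrow> vscale c x \<in> V"
  by (metis lincomb_scale lincomb_coords lincomb_in)

lemma coords_eqI: "x = lincomb c b n \<Longrightarrow> k < n \<Longrightarrow> coords n b x k = c k"
  by (simp add: coords_lincomb)

lemma coords_add:
  "x \<in> V \<Longrightarrow> y \<in> V \<Longrightarrow> k < n \<Longrightarrow> coords n b (vadd x y) k = coords n b x k + coords n b y k"
  by (rule coords_eqI) (simp_all add: lincomb_add lincomb_coords)

lemma coords_scale: "x \<in> V \<Longrightarrow> k < n \<Longrightarrow> coords n b (vscale c x) k = c * coords n b x k"
  by (rule coords_eqI) (simp_all add: lincomb_scale lincomb_coords)

lemma coords_inj:
  assumes "x \<in> V" "y \<in> V" "\<And>k. k < n \<Longrightarrow> coords n b x k = coords n b y k"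
  shows "x = y"
proof -
  have "lincomb (coords n b x) b n = lincomb (coords n b y) b n"
    using assms(3) by (rule lincomb_cong)
  thus ?thesis using assms(1,2) by (simp add: lincomb_coords)
qed

lemma basis_inj: "inj_on b {..<n}"
proof (rule inj_onI)
  fix i j assume ij: "i \<in> {..<n}" "j \<in> {..<n}" "b i = b j"
  have "lincomb (\<lambda>k. (if k = i then 1 else 0) - (if k = j then 1 else 0)) b n = 0"
    using ij by (simp add: lincomb_diff lincomb_delta)
  from lincomb_eq_zero[OF this, of i] ij show "i = j" by (auto split: if_splits)
qed

lemma dim_eq: "vector_space.dim vscale V = n"
proof -
  interpret vector_space "vscale :: 'a \<Rightarrow> ('i \<Rightarrow> 'a) \<Rightarrow> 'i \<Rightarrow> 'a"
    by unfold_locales (auto simp: vscale_def fun_eq_iff algebra_simps plus_fun_def)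
  show ?thesis
  proof (rule dim_unique[of "b ` {..<n}"])
    show "b ` {..<n} \<subseteq> V" using basis_in by auto
    show "card (b ` {..<n}) = n" using basis_inj by (simp add: card_image)
    show "V \<subseteq> span (b ` {..<n})"
    proof
      fix x assume "x \<in> V"
      hence "x = lincomb (coords n b x) b n" by (simp add: lincomb_coords)
      also have "\<dots> = (\<Sum>k<n. vscale (coords n b x k) (b k))" by (rule lincomb_eq_sum)
      also have "\<dots> \<in> span (b ` {..<n})"
        by (intro span_sum span_scale span_base) auto
      finally show "x \<in> span (b ` {..<n})" .
    qed
    show "\<not> dependent (b ` {..<n})"
      unfolding independent_explicit_module
    proof (intro allI impI)
      fix t u v assume t: "finite t" "t \<subseteq> b ` {..<n}" "(\<Sum>v\<in>t. vscale (u v) v) = 0" "v \<in> t"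
      define c where "c k = (if b k \<in> t then u (b k) else 0)" for k
      have "lincomb c b n = (\<Sum>k\<in>{k. k < n \<and> b k \<in> t}. vscale (u (b k)) (b k))"
        unfolding lincomb_eq_sum
        by (rule sum.mono_neutral_cong_right) (auto simp: c_def vscale_def fun_eq_iff)
      also have "\<dots> = (\<Sum>v\<in>t. vscale (u v) v)"
      proof (rule sym, rule sum.reindex_cong[of b])
        show "inj_on b {k. k < n \<and> b k \<in> t}" using basis_inj by (rule inj_on_subset) auto
        show "t = b ` {k. k < n \<and> b k \<in> t}" using t(2) by auto
      qed auto
      finally have "lincomb c b n = 0" using t(3) by simp
      moreover obtain k where "k < n" "v = b k" using t by auto
      ultimately show "u v = 0" using lincomb_eq_zero[of c k] t(4) by (simp add: c_def)
    qed
  qed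
qed

end

lemma linear_on_lincomb_3:
  assumes "basis_of V 3 b"
    and add: "\<And>x y. x \<in> V \<Longrightarrow> y \<in> V \<Longrightarrow> f (vadd x y) = vadd (f x) (f y)"
    and scale: "\<And>c x. x \<in> V \<Longrightarrow> f (vscale c x) = vscale c (f x)"
  shows "f (lincomb c b 3) = lincomb c (\<lambda>j. f (b j)) 3"
proof -
  interpret basis_of V 3 b by fact
  show ?thesis using basis_in by (simp add: lincomb_3 add scale vadd_in vscale_in)
qed

lemma has_dim_unique: "has_dim V n \<Longrightarrow> has_dim V m \<Longrightarrow> n = m"
  unfolding has_dim_def using basis_of.dim_eq[OF basis_of.intro] by metis

lemma mdim_eq: "has_dim V n \<Longrightarrow> mdim V = n"
  unfolding mdim_def using has_dim_unique by (metis someI_ex)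

lemma basis_of_cbasis: "has_dim (fst M) n \<Longrightarrow> basis_of (fst M) n (cbasis M)"
  unfolding basis_of_def cbasis_def using mdim_eq[of "fst M" n] unfolding has_dim_def
  by (metis someI_ex)

section \<open>Differential modules in coordinates\<close>

locale dmod_basis = basis_of V n b + derivation d
  for V :: "('i \<Rightarrow> 'a::field) set" and n b and d :: "'a \<Rightarrow> 'a" +
  fixes D :: "('i \<Rightarrow> 'a) \<Rightarrow> 'i \<Rightarrow> 'a" and a :: "'a mat"
  assumes dmod: "dmod d (V, D)"
    and connection: "\<And>j. j < n \<Longrightarrow> D (b j) = lincomb (\<lambda>i. a i j) b n"
begin

lemma D_add: "x \<in> V \<Longrightarrow> y \<in> V \<Longrightarrow> D (vadd x y) = vadd (D x) (D y)"
  using dmod by (simp add: dmod_def)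

lemma D_scale: "x \<in> V \<Longrightarrow> D (vscale c x) = vadd (vscale (d c) x) (vscale c (D x))"
  using dmod by (simp add: dmod_def)

lemma D_partial_lincomb:
  "m \<le> n \<Longrightarrow> D (lincomb c b m) = (\<lambda>x. \<Sum>k<m. d (c k) * b k x + c k * D (b k) x)"
proof (induction m)
  case 0
  have "vzero \<in> V" using lincomb_in[of "\<lambda>_. 0"] by (simp add: lincomb_zero)
  hence "D (vscale 0 vzero) = vzero"
    using D_scale[of vzero 0] by (simp add: d_zero vadd_def vscale_def vzero_def)
  thus ?case by (simp add: lincomb_def vscale_def vzero_def)
next
  case (Suc m)
  have "lincomb c b m = lincomb (\<lambda>k. if k < m then c k else 0) b n"
    using Suc.prems unfolding lincomb_def
    by (auto simp: fun_eq_iff split: if_splits intro!: sum.mono_neutral_cong_left)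
  hence in1: "lincomb c b m \<in> V" by (simp add: lincomb_in)
  have in2: "vscale (c m) (b m) \<in> V" using Suc.prems by (simp add: vscale_in basis_in)
  have "lincomb c b (Suc m) = vadd (lincomb c b m) (vscale (c m) (b m))"
    by (simp add: lincomb_def vadd_def vscale_def)
  thus ?case
    using Suc D_add[OF in1 in2] D_scale[OF basis_in] by (simp add: vadd_def vscale_def)
qed

lemma D_lincomb: "D (lincomb c b n) = lincomb (\<lambda>i. d (c i) + (\<Sum>j<n. a i j * c j)) b n"
proof -
  have "D (lincomb c b n) = (\<lambda>x. \<Sum>k<n. d (c k) * b k x + c k * D (b k) x)"
    by (rule D_partial_lincomb) simp
  also have "\<dots> = vadd (lincomb (\<lambda>i. d (c i)) b n) (lincomb c (\<lambda>j. D (b j)) n)"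
    by (simp add: lincomb_def vadd_def sum.distrib)
  also have "lincomb c (\<lambda>j. D (b j)) n = lincomb (\<lambda>i. \<Sum>j<n. a i j * c j) b n"
    by (rule lincomb_lincomb) (rule connection)
  finally show ?thesis by (simp add: lincomb_add)
qed

lemma coords_D:
  assumes "x \<in> V" "k < n"
  shows "coords n b (D x) k = d (coords n b x k) + (\<Sum>j<n. a k j * coords n b x j)"
proof (rule coords_eqI)
  show "D x = lincomb (\<lambda>i. d (coords n b x i) + (\<Sum>j<n. a i j * coords n b x j)) b n"
    using D_lincomb[of "coords n b x"] lincomb_coords[OF assms(1)] by simp
qed (fact assms(2))

end

lemma dmod_basis_cbasis:
  assumes "derivation d" "dmod d M" "has_dim (fst M) n"
  shows "dmod_basis (fst M) n (cbasis M) d (snd M) (cmat M)"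
proof -
  interpret basis_of "fst M" n "cbasis M" by (rule basis_of_cbasis[OF assms(3)])
  have "snd M (cbasis M j) \<in> fst M" if "j < n" for j
    using assms(2) basis_in[OF that] by (simp add: dmod_def)
  hence "\<forall>j<n. snd M (cbasis M j)
           = lincomb (\<lambda>i. coords n (cbasis M) (snd M (cbasis M j)) i) (cbasis M) n"
    by (simp add: lincomb_coords)
  hence "\<exists>a. \<forall>j<n. snd M (cbasis M j) = lincomb (\<lambda>i. a i j) (cbasis M) n"
    by (intro exI[of _ "\<lambda>i j. coords n (cbasis M) (snd M (cbasis M j)) i"])
  hence conn: "\<forall>j<n. snd M (cbasis M j) = lincomb (\<lambda>i. cmat M i j) (cbasis M) n"
    unfolding cmat_def mdim_eq[OF assms(3)] by (rule someI_ex)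
  show ?thesis
  proof (rule dmod_basis.intro)
    show "dmod_basis_axioms (fst M) n (cbasis M) d (snd M) (cmat M)"
      using assms(2) conn by (simp add: dmod_basis_axioms_def)
  qed (fact basis_of_axioms assms(1))+
qed

definition basis_change :: "nat \<Rightarrow> (nat \<Rightarrow> 'i \<Rightarrow> 'a::comm_ring_1) \<Rightarrow> (nat \<Rightarrow> 'i \<Rightarrow> 'a) \<Rightarrow> 'a mat" where
  "basis_change n b c = mat_trunc n (\<lambda>i j. coords n b (c j) i)"

lemma basis_change_lincomb:
  assumes "basis_of V n b" "basis_of V n c" "j < n"
  shows "c j = lincomb (\<lambda>i. basis_change n b c i j) b n"
proof -
  interpret b: basis_of V n b by fact
  interpret c: basis_of V n c by fact
  show ?thesis
    using assms(3) b.lincomb_coords[OF c.basis_in[OF assms(3)]]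
    by (simp add: basis_change_def mat_trunc_def cong: lincomb_cong)
qed

lemma basis_change_inverse:
  assumes B: "basis_of V n b" and C: "basis_of V n c"
  shows "mat_mult n (basis_change n b c) (basis_change n c b) = mat_one n"
proof (intro ext)
  interpret b: basis_of V n b by fact
  fix i j
  show "mat_mult n (basis_change n b c) (basis_change n c b) i j = mat_one n i j"
  proof (cases "i < n \<and> j < n")
    case True
    have "lincomb (\<lambda>k. if k = j then 1 else 0) b n
            = lincomb (\<lambda>i. \<Sum>k<n. basis_change n b c i k * basis_change n c b k j) b n"
      using True basis_change_lincomb[OF C B] lincomb_lincomb[OF basis_change_lincomb[OF B C]]
      by (simp add: lincomb_delta)
    from b.lincomb_inj[OF this, of i] True show ?thesis by (simp add: mat_mult_def mat_one_def)
  qed (auto simp: mat_mult_def mat_one_def)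
qed

lemma gauge_basis_change:
  assumes B: "dmod_basis V n b d D a" and C: "dmod_basis V n c d D e"
  shows "gauge d n (basis_change n b c) e a"
  unfolding gauge_def
proof (intro ext)
  interpret b: dmod_basis V n b d D a by fact
  interpret c: dmod_basis V n c d D e by fact
  let ?P = "basis_change n b c"
  have c_b: "c j = lincomb (\<lambda>i. ?P i j) b n" if "j < n" for j
    using b.basis_of_axioms c.basis_of_axioms that by (rule basis_change_lincomb)
  fix i j
  show "mat_mult n ?P e i j = (mat_mult n a ?P + mat_deriv d n ?P) i j"
  proof (cases "i < n \<and> j < n")
    case True
    have "lincomb (\<lambda>i. \<Sum>k<n. ?P i k * e k j) b n = D (c j)"
      using True by (simp add: c.connection lincomb_lincomb[OF c_b])
    also have "\<dots> = lincomb (\<lambda>i. d (?P i j) + (\<Sum>k<n. a i k * ?P k j)) b n"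
      using True by (simp add: c_b b.D_lincomb)
    finally have "lincomb (\<lambda>i. \<Sum>k<n. ?P i k * e k j) b n
                    = lincomb (\<lambda>i. d (?P i j) + (\<Sum>k<n. a i k * ?P k j)) b n" .
    from b.lincomb_inj[OF this, of i] True show ?thesis
      by (simp add: mat_mult_def mat_deriv_def add.commute)
  qed (auto simp: mat_mult_def mat_deriv_def)
qed

context derivation
begin

lemma det_mod_iso_trivE:
  assumes "dmod_iso (det_mod d M) (triv_mod d)"
  obtains g where "g \<noteq> 0" "d g = mat_trace (mdim (fst M)) (cmat M) * g"
proof -
  let ?t = "mat_trace (mdim (fst M)) (cmat M)"
  obtain f where bij: "bij_betw f (fst (det_mod d M)) (fst (triv_mod d))"
    and scale0: "\<forall>c. \<forall>x\<in>fst (det_mod d M). f (vscale c x) = vscale c (f x)"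
    and deriv0: "\<forall>x\<in>fst (det_mod d M). f (snd (det_mod d M) x) = snd (triv_mod d) (f x)"
    using assms unfolding dmod_iso_def by blast
  have scale: "f (vscale c x) = vscale c (f x)" for c x
    using scale0 by (simp add: det_mod_def)
  have deriv: "f (\<lambda>u. d (x u) + ?t * x u) = (\<lambda>u. d (f x u))" for x
    using deriv0 by (simp add: det_mod_def triv_mod_def mat_trace_def)
  define e :: "unit \<Rightarrow> 'a" where "e = (\<lambda>_. 1)"
  have "(\<lambda>u. d (e u) + ?t * e u) = vscale ?t e" by (simp add: e_def d_one vscale_def)
  hence "vscale ?t (f e) = (\<lambda>u. d (f e u))" using deriv[of e] scale by simp
  hence "d (f e ()) = ?t * f e ()" by (simp add: vscale_def fun_eq_iff)
  moreover have "f e () \<noteq> 0"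
  proof
    assume z: "f e () = 0"
    have "f x = vscale (x ()) (f e)" for x
    proof -
      have "x = vscale (x ()) e" by (simp add: vscale_def e_def fun_eq_iff)
      hence "f x = f (vscale (x ()) e)" by (rule arg_cong)
      thus ?thesis using scale by simp
    qed
    hence "f x = (\<lambda>_. 0)" for x using z by (simp add: vscale_def fun_eq_iff)
    moreover have "e \<in> range f" using bij by (simp add: bij_betw_def det_mod_def triv_mod_def)
    then obtain y where "f y = e" by blast
    ultimately show False by (simp add: e_def fun_eq_iff)
  qed
  ultimately show ?thesis using that by blast
qed

lemma det_mod_iso_trivI:
  assumes g: "g \<noteq> 0" "d g = mat_trace (mdim (fst M)) (cmat M) * g"
  shows "dmod_iso (det_mod d M) (triv_mod d)"
proof -
  have "bij_betw (vscale g) (fst (det_mod d M)) (fst (triv_mod d))"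
    using g(1) unfolding det_mod_def triv_mod_def
    by (intro bij_betw_byWitness[where f'="vscale (inverse g)"]) (auto simp: vscale_def fun_eq_iff)
  moreover have "vscale g (snd (det_mod d M) x) = snd (triv_mod d) (vscale g x)" for x
    by (simp add: det_mod_def triv_mod_def mat_trace_def vscale_def fun_eq_iff d_mult g(2)
        algebra_simps)
  moreover have "vscale g (vadd x y) = vadd (vscale g x) (vscale g y)" for x y
    by (simp add: vscale_def vadd_def fun_eq_iff algebra_simps)
  moreover have "vscale g (vscale c x) = vscale c (vscale g x)" for c x
    by (simp add: vscale_def fun_eq_iff algebra_simps)
  ultimately show ?thesis unfolding dmod_iso_def by blast
qed

end

definition unit_vec :: "nat \<Rightarrow> nat \<Rightarrow> 'a::{zero,one}" where
  "unit_vec k = (\<lambda>i. if i = k then 1 else 0)"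

definition std2_mod :: "('a::comm_ring_1 \<Rightarrow> 'a) \<Rightarrow> 'a mat \<Rightarrow> (nat, 'a) dmodule" where
  "std2_mod d B = ({v. \<forall>i\<ge>2. v i = 0},
     \<lambda>v i. if i < 2 then d (v i) + (B i 0 * v 0 + B i 1 * v 1) else 0)"

lemma lincomb_unit_vec_2: "lincomb c unit_vec 2 = (\<lambda>i. if i < 2 then c i else 0)"
  by (auto simp: lincomb_def unit_vec_def sum_lessThan_2 fun_eq_iff dest: less_2_cases)

lemma dmod_basis_std2_mod:
  assumes "derivation d"
  shows "dmod_basis (fst (std2_mod d B)) 2 unit_vec d (snd (std2_mod d B)) B"
proof -
  interpret derivation d by fact
  have "is_basis (fst (std2_mod d B)) 2 unit_vec"
    unfolding is_basis_def
  proof (intro conjI allI impI)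
    fix c :: "nat \<Rightarrow> 'a" and k :: nat assume "lincomb c unit_vec 2 = vzero" "k < 2"
    thus "c k = 0" by (auto simp: lincomb_unit_vec_2 vzero_def fun_eq_iff dest: spec[of _ k])
  next
    have "v = lincomb v unit_vec 2" if "\<forall>i\<ge>2. v i = 0" for v :: "nat \<Rightarrow> 'a"
      using that by (auto simp: lincomb_unit_vec_2 fun_eq_iff)
    thus "fst (std2_mod d B) = {lincomb c unit_vec 2 |c. True}"
      by (auto simp: std2_mod_def lincomb_unit_vec_2)
  qed
  hence "has_dim (fst (std2_mod d B)) 2" by (auto simp: has_dim_def)
  moreover have "snd (std2_mod d B) (unit_vec j) = lincomb (\<lambda>i. B i j) unit_vec 2" if "j < 2" for j
    using that by (auto simp: std2_mod_def lincomb_unit_vec_2 unit_vec_def d_zero d_one fun_eq_iff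
        dest: less_2_cases)
  ultimately show ?thesis
    using \<open>is_basis _ 2 unit_vec\<close>
    by unfold_locales (auto simp: std2_mod_def dmod_def vadd_def vscale_def fun_eq_iff d_simps
        algebra_simps)
qed

lemma dmod_std2_mod: "derivation d \<Longrightarrow> dmod d (std2_mod d C)"
  using dmod_basis.dmod[OF dmod_basis_std2_mod] by simp

lemma has_dim_std2_mod: "derivation d \<Longrightarrow> has_dim (fst (std2_mod d C)) 2"
  using dmod_basis_std2_mod basis_of.is_basis dmod_basis.axioms(1) has_dim_def by metis

lemma std2_mod_cbasis_change:
  assumes "derivation d"
  obtains P Q where "mat_mult 2 P Q = mat_one 2" "mat_mult 2 Q P = mat_one 2"
    "gauge d 2 P C (cmat (std2_mod d C))" "gauge d 2 Q (cmat (std2_mod d C)) C"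
proof -
  let ?N = "std2_mod d C"
  have std: "dmod_basis (fst ?N) 2 unit_vec d (snd ?N) C"
    using assms by (rule dmod_basis_std2_mod)
  have cb: "dmod_basis (fst ?N) 2 (cbasis ?N) d (snd ?N) (cmat ?N)"
    using assms dmod_std2_mod[OF assms] has_dim_std2_mod[OF assms] by (rule dmod_basis_cbasis)
  show ?thesis
    using that basis_change_inverse[OF cb[THEN dmod_basis.axioms(1)] std[THEN dmod_basis.axioms(1)]]
      basis_change_inverse[OF std[THEN dmod_basis.axioms(1)] cb[THEN dmod_basis.axioms(1)]]
      gauge_basis_change[OF cb std] gauge_basis_change[OF std cb]
    by blast
qed

lemma det_mod_std2_mod:
  assumes "derivation d" "mat_trace 2 C = 0"
  shows "dmod_iso (det_mod d (std2_mod d C)) (triv_mod d)"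
proof -
  interpret derivation d by fact
  let ?\<beta> = "cmat (std2_mod d C)"
  obtain P Q where QP: "mat_mult 2 Q P = mat_one 2" and Q: "gauge d 2 Q ?\<beta> C"
    using std2_mod_cbasis_change[OF assms(1)] by metis
  have "mat_deriv d 2 Q = mat_mult 2 (- C) Q + mat_mult 2 Q ?\<beta>"
    using Q by (simp add: gauge_def mat_mult_minus_left)
  hence "d (det2 Q) = mat_trace 2 ?\<beta> * det2 Q"
    using assms(2) by (simp add: d_det2 mat_trace_def sum_negf)
  moreover have "det2 Q \<noteq> 0" using arg_cong[OF QP, of det2] by (auto simp: det2_mult)
  ultimately show ?thesis
    by (intro det_mod_iso_trivI) (simp_all add: mdim_eq[OF has_dim_std2_mod[OF assms(1)]])
qed

section \<open>Symmetric squares in coordinates\<close>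

lemma sym2_mod_carrier:
  "fst (sym2_mod d M) = {S. \<forall>i j. S (i, j) = S (j, i) \<and> (mdim (fst M) \<le> i \<longrightarrow> S (i, j) = 0)}"
  by (simp add: sym2_mod_def Let_def)

lemma sym2_mod_deriv:
  "snd (sym2_mod d M) F = (\<lambda>(i, j). sym2_deriv d (mdim (fst M)) (cmat M) (\<lambda>i j. F (i, j)) i j)"
  by (auto simp: sym2_mod_def Let_def sym2_deriv_def mat_deriv_def mat_mult_def mat_transpose_def
      fun_eq_iff)

lemma sym2_mod_horizontal_iff:
  assumes "mdim (fst M) = n"
  shows "(\<exists>F\<in>fst (sym2_mod d M). F \<noteq> vzero \<and> snd (sym2_mod d M) F = vzero)
     \<longleftrightarrow> (\<exists>S. S \<noteq> 0 \<and> mat_trunc n S = S \<and> mat_transpose S = S \<and> sym2_deriv d n (cmat M) S = 0)"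
proof
  assume "\<exists>F\<in>fst (sym2_mod d M). F \<noteq> vzero \<and> snd (sym2_mod d M) F = vzero"
  then obtain F where F: "F \<in> fst (sym2_mod d M)" "F \<noteq> vzero" "snd (sym2_mod d M) F = vzero"
    by blast
  define S where "S = (\<lambda>i j. F (i, j))"
  have S_sym: "S i j = S j i" and S_zero: "n \<le> i \<Longrightarrow> S i j = 0" for i j
    using F(1) assms by (auto simp: sym2_mod_carrier S_def)
  have "mat_trunc n S = S"
  proof (intro ext)
    fix i j
    show "mat_trunc n S i j = S i j"
      using S_zero[of i j] S_zero[of j i] S_sym[of i j] by (auto simp: mat_trunc_def)
  qed
  moreover have "mat_transpose S = S" using S_sym by (simp add: mat_transpose_def fun_eq_iff)
  moreover have "S \<noteq> 0" using F(2) by (auto simp: S_def vzero_def fun_eq_iff)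
  moreover have "sym2_deriv d n (cmat M) S = 0"
    using F(3) assms by (auto simp: sym2_mod_deriv S_def vzero_def fun_eq_iff dest: fun_cong)
  ultimately show
    "\<exists>S. S \<noteq> 0 \<and> mat_trunc n S = S \<and> mat_transpose S = S \<and> sym2_deriv d n (cmat M) S = 0"
    by blast
next
  assume "\<exists>S. S \<noteq> 0 \<and> mat_trunc n S = S \<and> mat_transpose S = S \<and> sym2_deriv d n (cmat M) S = 0"
  then obtain S where S: "S \<noteq> 0" "mat_trunc n S = S" "mat_transpose S = S"
    "sym2_deriv d n (cmat M) S = 0"
    by blast
  define F where "F = (\<lambda>(i, j). S i j)"
  have "S i j = S j i" for i j
    using fun_cong[OF fun_cong[OF S(3), of i], of j] by (simp add: mat_transpose_def)
  moreover have "n \<le> i \<Longrightarrow> S i j = 0" for i j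
    using fun_cong[OF fun_cong[OF S(2), of i], of j] by (simp add: mat_trunc_def)
  ultimately have "F \<in> fst (sym2_mod d M)"
    using assms by (simp add: sym2_mod_carrier F_def)
  moreover have "F \<noteq> vzero" using S(1) by (auto simp: F_def vzero_def fun_eq_iff)
  moreover have "snd (sym2_mod d M) F = vzero"
    using S(4) assms by (auto simp: sym2_mod_deriv F_def vzero_def fun_eq_iff)
  ultimately show "\<exists>F\<in>fst (sym2_mod d M). F \<noteq> vzero \<and> snd (sym2_mod d M) F = vzero"
    by blast
qed

definition mat_vec3 :: "'a::comm_ring_1 mat \<Rightarrow> (nat \<Rightarrow> 'a) \<Rightarrow> nat \<Rightarrow> 'a" where
  "mat_vec3 A x = (\<lambda>i. A i 0 * x 0 + A i 1 * x 1 + A i 2 * x 2)"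

lemma mat_vec3_add: "mat_vec3 S (\<lambda>i. x i + y i) = (\<lambda>i. mat_vec3 S x i + mat_vec3 S y i)"
  by (simp add: mat_vec3_def algebra_simps fun_eq_iff)

lemma mat_vec3_scale: "mat_vec3 S (\<lambda>i. c * x i) = (\<lambda>i. c * mat_vec3 S x i)"
  by (simp add: mat_vec3_def algebra_simps fun_eq_iff)

lemma mat_vec3_diff_scale:
  "mat_vec3 S (\<lambda>i. x i - c * y i) = (\<lambda>i. mat_vec3 S x i - c * mat_vec3 S y i)"
  by (simp add: mat_vec3_def algebra_simps fun_eq_iff)

lemma mat_vec3_inverse:
  assumes "mat_mult 3 P Q = mat_one 3" "k < 3"
  shows "mat_vec3 P (mat_vec3 Q c) k = c k"
proof -
  have e: "P k 0 * Q 0 j + P k 1 * Q 1 j + P k 2 * Q 2 j = (if k = j then 1 else 0)"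
    if "j < 3" for j
    using fun_cong[OF fun_cong[OF assms(1), of k], of j] that assms(2)
    by (simp add: mat_mult_3 mat_one_def)
  have "mat_vec3 P (mat_vec3 Q c) k = c 0 * (P k 0 * Q 0 0 + P k 1 * Q 1 0 + P k 2 * Q 2 0)
     + c 1 * (P k 0 * Q 0 1 + P k 1 * Q 1 1 + P k 2 * Q 2 1)
     + c 2 * (P k 0 * Q 0 2 + P k 1 * Q 1 2 + P k 2 * Q 2 2)"
    by (simp add: mat_vec3_def algebra_simps)
  also have "\<dots> = c k" using assms(2) e[of 0] e[of 1] e[of 2] by (auto dest!: less_3_cases)
  finally show ?thesis .
qed

context derivation
begin

lemma gauge_mat_vec3:
  assumes "gauge d 3 Q a A" "i < 3"
  shows "mat_vec3 Q (\<lambda>k. d (c k) + (\<Sum>j<3. a k j * c j)) i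
           = d (mat_vec3 Q c i) + mat_vec3 A (mat_vec3 Q c) i"
proof -
  have dQ: "d (Q i j) = (Q i 0 * a 0 j + Q i 1 * a 1 j + Q i 2 * a 2 j)
                       - (A i 0 * Q 0 j + A i 1 * Q 1 j + A i 2 * Q 2 j)"
    if "j < 3" for j
    using fun_cong[OF fun_cong[OF assms(1)[unfolded gauge_def], of i], of j] that assms(2)
    by (simp add: mat_mult_3 mat_deriv_def algebra_simps)
  show ?thesis unfolding mat_vec3_def sum_lessThan_3 by (simp add: d_simps dQ algebra_simps)
qed

end

text \<open>Coordinates on sym2 of a module with basis e0, e1, with respect to e0 e0, e0 e1 + e1 e0,
  e1 e1.\<close>

definition sym2_mat :: "(nat \<Rightarrow> 'a::zero) \<Rightarrow> 'a mat" where
  "sym2_mat u = (\<lambda>i j. if i = 0 \<and> j = 0 then u 0 else if i = 1 \<and> j = 1 then u 2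
      else if (i = 0 \<and> j = 1) \<or> (i = 1 \<and> j = 0) then u 1 else 0)"

definition sym2_vec :: "'a::zero mat \<Rightarrow> nat \<Rightarrow> 'a" where
  "sym2_vec U = (\<lambda>i. if i = 0 then U 0 0 else if i = 1 then U 0 1 else if i = 2 then U 1 1 else 0)"

text \<open>The connection matrix of sym2 N in these coordinates when N has connection matrix \<beta>.\<close>

definition sym2_conn :: "'a::comm_ring_1 mat \<Rightarrow> 'a mat" where
  "sym2_conn \<beta> = mat_trunc 3 (\<lambda>i j.
     if i = 0 \<and> j = 0 then 2 * \<beta> 0 0 else if i = 0 \<and> j = 1 then 2 * \<beta> 0 1
     else if i = 0 \<and> j = 2 then 0
     else if i = 1 \<and> j = 0 then \<beta> 1 0 else if i = 1 \<and> j = 1 then \<beta> 0 0 + \<beta> 1 1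
     else if i = 1 \<and> j = 2 then \<beta> 0 1
     else if i = 2 \<and> j = 0 then 0 else if i = 2 \<and> j = 1 then 2 * \<beta> 1 0 else 2 * \<beta> 1 1)"

lemma sym2_vec_sym2_mat: "i < 3 \<Longrightarrow> sym2_vec (sym2_mat u) i = u i"
  by (auto simp: sym2_vec_def sym2_mat_def dest: less_3_cases)

lemma sym2_mat_sym2_vec:
  assumes "mat_transpose U = U"
  shows "sym2_mat (sym2_vec U) = mat_trunc 2 U"
proof (intro ext)
  fix i j
  have U10: "U (Suc 0) 0 = U 0 (Suc 0)"
    using fun_cong[OF fun_cong[OF assms, of 1], of 0] by (simp add: mat_transpose_def)
  show "sym2_mat (sym2_vec U) i j = mat_trunc 2 U i j"
  proof (cases "i < 2 \<and> j < 2")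
    case True
    then have "i < 2" "j < 2" by auto
    then show ?thesis
      by (cases rule: less_2_pair_cases) (simp_all add: sym2_mat_def sym2_vec_def mat_trunc_def U10)
  qed (auto simp: sym2_mat_def sym2_vec_def mat_trunc_def)
qed

lemma sym2_mat_cong: "(\<And>i. i < 3 \<Longrightarrow> u i = w i) \<Longrightarrow> sym2_mat u = sym2_mat w"
  by (simp add: sym2_mat_def fun_eq_iff)

lemma sym2_mat_inj: "sym2_mat u = sym2_mat w \<Longrightarrow> i < 3 \<Longrightarrow> u i = w i"
  by (metis sym2_vec_sym2_mat)

lemma sym2_mat_add: "sym2_mat (\<lambda>i. u i + w i) = sym2_mat u + sym2_mat (w :: nat \<Rightarrow> 'a::comm_ring_1)"
  by (simp add: sym2_mat_def fun_eq_iff)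

lemma sym2_mat_scale: "sym2_mat (\<lambda>i. c * u i) = mat_scale c (sym2_mat (u :: nat \<Rightarrow> 'a::comm_ring_1))"
  by (simp add: sym2_mat_def mat_scale_def fun_eq_iff)

lemma mat_transpose_sym2_mat: "mat_transpose (sym2_mat u) = sym2_mat u"
  by (auto simp: sym2_mat_def mat_transpose_def fun_eq_iff)

lemma mat_trunc_sym2_mat: "mat_trunc 2 (sym2_mat u) = sym2_mat u"
  by (auto simp: sym2_mat_def mat_trunc_def fun_eq_iff)

lemma sym2_deriv_sym2_mat:
  "sym2_deriv d 2 \<beta> (sym2_mat u) = sym2_mat (\<lambda>i. d (u i) + mat_vec3 (sym2_conn \<beta>) u i)"
proof (intro ext)
  fix i j
  show "sym2_deriv d 2 \<beta> (sym2_mat u) i j = sym2_mat (\<lambda>i. d (u i) + mat_vec3 (sym2_conn \<beta>) u i) i j"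
  proof (cases "i < 2 \<and> j < 2")
    case True
    then have "i < 2" "j < 2" by auto
    then show ?thesis
      by (cases rule: less_2_pair_cases)
        (simp_all add: sym2_deriv_def sym2_mat_def mat_deriv_def mat_mult_2
          mat_transpose_def mat_vec3_def sym2_conn_def mat_trunc_def algebra_simps)
  qed (auto simp: sym2_deriv_def sym2_mat_def mat_deriv_def mat_mult_2)
qed

lemma sym2_vec_sym2_deriv:
  assumes "mat_transpose U = U" "i < 3"
  shows "sym2_vec (sym2_deriv d 2 \<beta> U) i = d (sym2_vec U i) + mat_vec3 (sym2_conn \<beta>) (sym2_vec U) i"
proof -
  have "sym2_deriv d 2 \<beta> U
          = sym2_mat (\<lambda>i. d (sym2_vec U i) + mat_vec3 (sym2_conn \<beta>) (sym2_vec U) i)"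
    using sym2_deriv_sym2_mat[of d \<beta> "sym2_vec U"] sym2_mat_sym2_vec[OF assms(1)] by simp
  thus ?thesis using assms(2) by (simp add: sym2_vec_sym2_mat)
qed

text \<open>c times the matrix of 2 x0 x2 - x1^2/2, which is -1/2 times the discriminant of the binary
  quadratic form x0 X^2 + x1 X Y + x2 Y^2, hence invariant under sym2 of traceless matrices.\<close>

definition det_form :: "'a::field \<Rightarrow> 'a mat" where
  "det_form c = (\<lambda>i j. if (i = 0 \<and> j = 2) \<or> (i = 2 \<and> j = 0) then c
      else if i = 1 \<and> j = 1 then - c / 2 else 0)"

lemma mat_trunc_det_form: "mat_trunc 3 (det_form c) = det_form c"
  by (auto simp: mat_trunc_def det_form_def fun_eq_iff)

lemma mat_transpose_det_form: "mat_transpose (det_form c) = det_form c"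
  by (auto simp: mat_transpose_def det_form_def fun_eq_iff)

lemma det_form_nonzero: "c \<noteq> 0 \<Longrightarrow> det_form c \<noteq> 0"
  by (auto simp: det_form_def fun_eq_iff dest: fun_cong[of _ _ 0])

lemma sym2_deriv_det_form:
  fixes d :: "'a::field_char_0 \<Rightarrow> 'a"
  assumes "derivation d" "d c = - 2 * mat_trace 2 \<beta> * c"
  shows "sym2_deriv d 3 (sym2_conn \<beta>) (det_form c) = 0"
proof (intro ext)
  interpret derivation d by fact
  have dc: "d (- (c / 2)) = mat_trace 2 \<beta> * c"
    by (simp add: d_minus d_divide_numeral assms(2))
  fix i j
  show "sym2_deriv d 3 (sym2_conn \<beta>) (det_form c) i j = 0 i j"
  proof (cases "i < 3 \<and> j < 3")
    case True
    then have "i < 3" "j < 3" by auto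
    then show ?thesis
      by (cases rule: less_3_pair_cases)
        (simp_all add: sym2_deriv_def mat_deriv_def mat_mult_3 mat_transpose_def det_form_def
          sym2_conn_def mat_trunc_def mat_trace_2 assms(2) dc d_zero algebra_simps)
  qed (auto simp: sym2_deriv_def mat_deriv_def mat_mult_3)
qed

definition sym2_root :: "'a::field mat \<Rightarrow> 'a mat" where
  "sym2_root A = (\<lambda>i j. if i = 0 \<and> j = 0 then A 0 0 / 2 else if i = 0 \<and> j = 1 then A 0 1 / 2
      else if i = 1 \<and> j = 0 then A 1 0 else if i = 1 \<and> j = 1 then - A 0 0 / 2 else 0)"

lemma mat_trace_sym2_root: "mat_trace 2 (sym2_root A) = 0"
  by (simp add: mat_trace_2 sym2_root_def)

text \<open>A connection preserving det_form \<mu> lies in its orthogonal Lie algebra so(3), which is the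
  image of the traceless matrices under sym2_conn.\<close>

lemma sym2_conn_sym2_root:
  fixes A :: "'a::field_char_0 mat"
  assumes "derivation d" "sym2_deriv d 3 A (det_form \<mu>) = 0" "d \<mu> = 0" "\<mu> \<noteq> 0"
  shows "mat_trunc 3 A = sym2_conn (sym2_root A)"
proof -
  interpret derivation d by fact
  have "d (- (\<mu> / 2)) = 0" by (simp add: d_minus d_divide_numeral assms(3))
  hence "mat_deriv d 3 (det_form \<mu>) = 0"
    by (auto simp: mat_deriv_def det_form_def fun_eq_iff d_zero assms(3))
  hence h: "(A i 0 * det_form \<mu> 0 j + A i 1 * det_form \<mu> 1 j + A i 2 * det_form \<mu> 2 j)
          + (det_form \<mu> i 0 * A j 0 + det_form \<mu> i 1 * A j 1 + det_form \<mu> i 2 * A j 2) = 0"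
    if "i < 3" "j < 3" for i j
    using fun_cong[OF fun_cong[OF assms(2), of i], of j] that
    by (simp add: sym2_deriv_def mat_mult_3 mat_transpose_def)
  have "A 0 2 = 0" "A 1 1 = 0" "A 2 0 = 0"
    using h[of 0 0] h[of 1 1] h[of 2 2] assms(4) by (simp_all add: det_form_def)
  moreover have "2 * A 1 2 = A 0 1" "2 * A 1 0 = A 2 1"
    using h[of 0 1] h[of 1 2] assms(4) by (simp_all add: det_form_def algebra_simps)
  moreover have "\<mu> * (A 2 2 + A 0 0) = 0"
    using h[of 0 2] by (simp add: det_form_def algebra_simps)
  hence "A 2 2 = - A 0 0" using assms(4) by (simp add: eq_neg_iff_add_eq_0)
  ultimately have shape: "A 0 2 = 0" "A (Suc 0) (Suc 0) = 0" "A 2 0 = 0"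
    "A (Suc 0) 2 = A 0 (Suc 0) / 2" "A 2 (Suc 0) = 2 * A (Suc 0) 0" "A 2 2 = - A 0 0"
    by (simp_all add: field_simps)
  show ?thesis
  proof (intro ext)
    fix i j
    show "mat_trunc 3 A i j = sym2_conn (sym2_root A) i j"
    proof (cases "i < 3 \<and> j < 3")
      case True
      then have "i < 3" "j < 3" by auto
      then show ?thesis
        by (cases rule: less_3_pair_cases)
          (simp_all add: mat_trunc_def sym2_conn_def sym2_root_def shape)
    qed (auto simp: mat_trunc_def sym2_conn_def)
  qed
qed

section \<open>Ternary quadratic forms\<close>

definition dot3 :: "(nat \<Rightarrow> 'a::comm_ring_1) \<Rightarrow> (nat \<Rightarrow> 'a) \<Rightarrow> 'a" where
  "dot3 x y = x 0 * y 0 + x 1 * y 1 + x 2 * y 2"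

definition cross3 :: "(nat \<Rightarrow> 'a::comm_ring_1) \<Rightarrow> (nat \<Rightarrow> 'a) \<Rightarrow> nat \<Rightarrow> 'a" where
  "cross3 x y = (\<lambda>i. if i = 0 then x 1 * y 2 - x 2 * y 1 else if i = 1 then x 2 * y 0 - x 0 * y 2
                    else x 0 * y 1 - x 1 * y 0)"

definition rows3 :: "(nat \<Rightarrow> 'a::zero) \<Rightarrow> (nat \<Rightarrow> 'a) \<Rightarrow> (nat \<Rightarrow> 'a) \<Rightarrow> 'a mat" where
  "rows3 x y z = (\<lambda>i. if i = 0 then x else if i = 1 then y else if i = 2 then z else (\<lambda>_. 0))"

lemma dot3_comm: "dot3 x y = dot3 y x"
  by (simp add: dot3_def mult_ac)

lemma dot3_diff_scale_left: "dot3 (\<lambda>i. x i - c * y i) z = dot3 x z - c * dot3 y z"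
  by (simp add: dot3_def algebra_simps)

lemma dot3_diff_scale_right: "dot3 z (\<lambda>i. x i - c * y i) = dot3 z x - c * dot3 z y"
  by (simp add: dot3_def algebra_simps)

lemma dot3_scale_left: "dot3 (\<lambda>i. c * x i) z = c * dot3 x z"
  by (simp add: dot3_def algebra_simps)

lemma dot3_scale_right: "dot3 z (\<lambda>i. c * x i) = c * dot3 z x"
  by (simp add: dot3_def algebra_simps)

lemma dot3_mat_vec3_comm:
  assumes "mat_transpose S = S"
  shows "dot3 x (mat_vec3 S y) = dot3 y (mat_vec3 S x)"
proof -
  have "S 1 0 = S 0 1" "S 2 0 = S 0 2" "S 2 1 = S 1 2"
    using assms by (metis mat_transpose_def)+
  thus ?thesis by (simp add: dot3_def mat_vec3_def algebra_simps)
qed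

lemma cross3_orthogonal: "dot3 (cross3 x y) x = 0" "dot3 (cross3 x y) y = 0"
  by (simp_all add: cross3_def dot3_def algebra_simps)

lemma det3_rows3_cross3: "det3 (rows3 q (cross3 x y) p) = dot3 x p * dot3 y q - dot3 x q * dot3 y p"
  by (simp add: det3_def rows3_def cross3_def dot3_def algebra_simps)

lemma det3_rows3_scale:
  "det3 (rows3 (\<lambda>i. s * x i) (\<lambda>i. t * y i) z) = s * t * det3 (rows3 x y z)"
  by (simp add: det3_def rows3_def algebra_simps)

lemma congruence_entry_3:
  "i < 3 \<Longrightarrow> j < 3 \<Longrightarrow> mat_mult 3 (mat_mult 3 Q S) (mat_transpose Q) i j
     = dot3 (\<lambda>k. Q i k) (mat_vec3 S (\<lambda>k. Q j k))"
  by (simp add: mat_mult_3 mat_transpose_def dot3_def mat_vec3_def algebra_simps)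

definition monomial_pair :: "nat \<Rightarrow> nat \<Rightarrow> nat \<Rightarrow> nat" where
  "monomial_pair i j = (\<lambda>k. (if k = i then 1 else 0) + (if k = j then 1 else 0))"

lemma finite_monomials: "finite (monomials m r)"
proof (rule finite_subset)
  show "monomials m r \<subseteq> {f. \<forall>x. (x \<in> {..<m} \<longrightarrow> f x \<in> {..r}) \<and> (x \<notin> {..<m} \<longrightarrow> f x = 0)}"
  proof
    fix f assume "f \<in> monomials m r"
    hence f: "\<And>i. m \<le> i \<Longrightarrow> f i = 0" "(\<Sum>i<m. f i) = r" by (auto simp: monomials_def)
    have "x < m \<Longrightarrow> f x \<le> r" for x unfolding f(2)[symmetric] by (intro member_le_sum) auto
    thus "f \<in> {f. \<forall>x. (x \<in> {..<m} \<longrightarrow> f x \<in> {..r}) \<and> (x \<notin> {..<m} \<longrightarrow> f x = 0)}"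
      using f(1) by auto
  qed
qed (intro finite_set_of_finite_funs; simp)

lemma monomial_pair_in_monomials: "i < 3 \<Longrightarrow> j < 3 \<Longrightarrow> monomial_pair i j \<in> monomials 3 2"
  unfolding monomials_def mem_Collect_eq
proof (intro conjI allI impI)
  assume "i < 3" "j < 3"
  thus "(\<Sum>k<3. monomial_pair i j k) = 2"
    by (cases rule: less_3_pair_cases) (simp_all add: sum_lessThan_3 monomial_pair_def)
  fix k :: nat assume "3 \<le> k"
  thus "monomial_pair i j k = 0" using \<open>i < 3\<close> \<open>j < 3\<close> by (simp add: monomial_pair_def)
qed

lemma prod_monomial_pair:
  assumes "i < 3" "j < 3"
  shows "(\<Prod>k<3. (x k :: 'a::comm_ring_1) ^ monomial_pair i j k) = x i * x j"
  using assms by (cases rule: less_3_pair_cases)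
    (simp_all add: prod_lessThan_3 monomial_pair_def power2_eq_square mult_ac)

lemma C1_ternary_form_isotropic:
  fixes S :: "'a::field mat"
  assumes "C1_field TYPE('a)"
  shows "\<exists>x. (\<exists>i<3. x i \<noteq> 0) \<and> dot3 x (mat_vec3 S x) = 0"
proof -
  define c where "c \<alpha> = (\<Sum>i<3. \<Sum>j<3. if \<alpha> = monomial_pair i j then S i j else 0)" for \<alpha>
  obtain x where x: "\<exists>i<3. x i \<noteq> 0" "form_eval 3 2 c x = 0"
    using assms[unfolded C1_field_def, rule_format, of 2 3 c] by auto
  have "form_eval 3 2 c x = (\<Sum>\<alpha>\<in>monomials 3 2. \<Sum>i<3. \<Sum>j<3.
      if \<alpha> = monomial_pair i j then S i j * (\<Prod>k<3. x k ^ \<alpha> k) else 0)"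
    unfolding form_eval_def c_def sum_distrib_right by (intro sum.cong refl) simp
  also have "\<dots> = (\<Sum>i<3. \<Sum>j<3. \<Sum>\<alpha>\<in>monomials 3 2.
      if monomial_pair i j = \<alpha> then S i j * (\<Prod>k<3. x k ^ \<alpha> k) else 0)"
    by (subst sum.swap, subst (2) sum.swap) (simp add: eq_commute)
  also have "\<dots> = (\<Sum>i<3. \<Sum>j<3. S i j * (x i * x j))"
    by (intro sum.cong refl)
      (simp add: finite_monomials monomial_pair_in_monomials prod_monomial_pair)
  also have "\<dots> = dot3 x (mat_vec3 S x)"
    by (simp add: sum_lessThan_3 dot3_def mat_vec3_def algebra_simps)
  finally show ?thesis using x by auto
qed

text \<open>The frame: p is a hyperbolic partner of the isotropic vector q, and r, orthogonal to both,
  is a cross product, which makes the determinant of the frame 1.\<close>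

lemma isotropic_frame:
  fixes S :: "'a::field_char_0 mat"
  assumes S_sym: "mat_transpose S = S" and inv: "mat_mult 3 S T = mat_one 3"
    and q: "\<exists>i<3. q i \<noteq> 0" "dot3 q (mat_vec3 S q) = 0"
  obtains p r where "dot3 p (mat_vec3 S p) = 0"
    "dot3 q (mat_vec3 S p) = 1" "dot3 p (mat_vec3 S q) = 1"
    "dot3 r (mat_vec3 S q) = 0" "dot3 r (mat_vec3 S p) = 0"
    "dot3 q (mat_vec3 S r) = 0" "dot3 p (mat_vec3 S r) = 0"
    "det3 (rows3 q r p) = 1" "dot3 r (mat_vec3 S r) = - det3 S"
proof -
  let ?B = "\<lambda>x y. dot3 x (mat_vec3 S y)"
  have B_sym: "?B x y = ?B y x" for x y by (rule dot3_mat_vec3_comm[OF S_sym])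
  have "\<exists>k<3. mat_vec3 S q k \<noteq> 0"
  proof (rule ccontr)
    assume "\<not> ?thesis"
    hence "mat_vec3 T (mat_vec3 S q) k = 0" for k by (simp add: mat_vec3_def)
    thus False
      using mat_vec3_inverse[OF mat3_left_inverse_of_right_inverse[OF inv]] q(1) by metis
  qed
  then obtain k where k: "k < 3" "mat_vec3 S q k \<noteq> 0" by blast
  define u where "u = (\<lambda>i. if i = k then inverse (mat_vec3 S q k) else 0)"
  have uq: "dot3 u (mat_vec3 S q) = 1" using k by (auto simp: u_def dot3_def dest!: less_3_cases)
  define c where "c = ?B u u / 2"
  define p where "p = (\<lambda>i. u i - c * q i)"
  have qp: "?B q p = 1"
    unfolding p_def mat_vec3_diff_scale dot3_diff_scale_right using q(2) uq B_sym[of q u] by simp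
  have pp: "?B p p = 0"
    unfolding p_def mat_vec3_diff_scale dot3_diff_scale_right dot3_diff_scale_left
    using q(2) uq B_sym[of q u] by (simp add: c_def)
  have pq: "?B p q = 1" using qp B_sym[of p q] by simp
  define r where "r = cross3 (mat_vec3 S q) (mat_vec3 S p)"
  have rq: "?B r q = 0" and rp: "?B r p = 0" unfolding r_def by (simp_all add: cross3_orthogonal)
  have qr: "?B q r = 0" and pr: "?B p r = 0" using rq rp B_sym by metis+
  have det: "det3 (rows3 q r p) = 1"
    unfolding r_def det3_rows3_cross3 using qp pq q(2) pp by (simp add: dot3_comm)
  have "det3 (mat_mult 3 (mat_mult 3 (rows3 q r p) S) (mat_transpose (rows3 q r p))) = det3 S"
    using det by (simp add: det3_mult det3_transpose)
  moreover have
    "det3 (mat_mult 3 (mat_mult 3 (rows3 q r p) S) (mat_transpose (rows3 q r p))) = - ?B r r"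
    unfolding det3_def by (simp add: congruence_entry_3 rows3_def q(2) qp pq pp rq qr rp pr
        cong: if_cong)
  ultimately have "?B r r = - det3 S" by (metis minus_minus)
  with pp qp pq rq rp qr pr det that show ?thesis by blast
qed

lemma congruence_frame_det_form:
  fixes S :: "'a::field mat"
  assumes "dot3 q (mat_vec3 S q) = 0" "dot3 p (mat_vec3 S p) = 0"
    "dot3 q (mat_vec3 S p) = 1" "dot3 p (mat_vec3 S q) = 1"
    "dot3 r (mat_vec3 S q) = 0" "dot3 r (mat_vec3 S p) = 0"
    "dot3 q (mat_vec3 S r) = 0" "dot3 p (mat_vec3 S r) = 0"
    and rr: "g * (g * dot3 r (mat_vec3 S r)) = - (\<mu> / 2)"
  defines "Q \<equiv> rows3 (\<lambda>i. \<mu> * q i) (\<lambda>i. g * r i) p"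
  shows "mat_mult 3 (mat_mult 3 Q S) (mat_transpose Q) = det_form \<mu>"
proof (intro ext)
  have Q: "Q 0 = (\<lambda>i. \<mu> * q i)" "Q (Suc 0) = (\<lambda>i. g * r i)" "Q 2 = p"
    by (simp_all add: Q_def rows3_def)
  fix i j
  show "mat_mult 3 (mat_mult 3 Q S) (mat_transpose Q) i j = det_form \<mu> i j"
  proof (cases "i < 3 \<and> j < 3")
    case True
    then have "i < 3" "j < 3" by auto
    then show ?thesis
      by (cases rule: less_3_pair_cases)
        (simp_all add: congruence_entry_3 Q det_form_def dot3_scale_left dot3_scale_right
          mat_vec3_scale assms(1-8) rr)
  qed (auto simp: mat_mult_3 det_form_def)
qed

section \<open>A symmetric square carries a horizontal form\<close>

definition sym2_coord_matrix ::
    "(nat \<Rightarrow> 'i \<Rightarrow> 'a) \<Rightarrow> (('i \<Rightarrow> 'a) \<Rightarrow> nat \<times> nat \<Rightarrow> 'a) \<Rightarrow> 'a::zero mat" where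
  "sym2_coord_matrix b f = mat_trunc 3 (\<lambda>i j. sym2_vec (\<lambda>k l. f (b j) (k, l)) i)"

lemma sym2_vec_linear_lincomb:
  assumes "basis_of V 3 b"
    and "\<And>x y. x \<in> V \<Longrightarrow> y \<in> V \<Longrightarrow> f (vadd x y) = vadd (f x) (f y)"
    and "\<And>c x. x \<in> V \<Longrightarrow> f (vscale c x) = vscale c (f x)"
    and "l < 3"
  shows "sym2_vec (\<lambda>i j. f (lincomb c b 3) (i, j)) l = mat_vec3 (sym2_coord_matrix b f) c l"
  using linear_on_lincomb_3[OF assms(1-3)] assms(4)
  by (simp add: sym2_vec_def lincomb_def sum_lessThan_3 mat_vec3_def sym2_coord_matrix_def
      mat_trunc_def algebra_simps)

lemma sym2_coord_matrix_gauge: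
  assumes B: "dmod_basis (fst M) 3 b d (snd M) a" and N: "mdim (fst N) = 2"
    and add: "\<And>x y. x \<in> fst M \<Longrightarrow> y \<in> fst M \<Longrightarrow> f (vadd x y) = vadd (f x) (f y)"
    and scale: "\<And>c x. x \<in> fst M \<Longrightarrow> f (vscale c x) = vscale c (f x)"
    and into: "\<And>x. x \<in> fst M \<Longrightarrow> f x \<in> fst (sym2_mod d N)"
    and deriv: "\<And>x. x \<in> fst M \<Longrightarrow> f (snd M x) = snd (sym2_mod d N) (f x)"
  shows "gauge d 3 (sym2_coord_matrix b f) a (sym2_conn (cmat N))"
proof -
  interpret dmod_basis "fst M" 3 b d "snd M" a by (fact B)
  let ?R = "sym2_coord_matrix b f" and ?\<alpha> = "sym2_conn (cmat N)"
  have "mat_mult 3 ?R a l j = mat_mult 3 ?\<alpha> ?R l j + mat_deriv d 3 ?R l j" for l j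
  proof (cases "l < 3 \<and> j < 3")
    case True
    have bj: "b j \<in> fst M" using basis_in True by simp
    have "mat_transpose (\<lambda>i k. f (b j) (i, k)) = (\<lambda>i k. f (b j) (i, k))"
      using into[OF bj] by (auto simp: sym2_mod_carrier mat_transpose_def)
    hence "sym2_vec (\<lambda>i k. f (snd M (b j)) (i, k)) l
             = d (?R l j) + mat_vec3 ?\<alpha> (\<lambda>i. ?R i j) l"
      using True
      by (simp add: deriv[OF bj] sym2_mod_deriv N sym2_vec_sym2_deriv sym2_coord_matrix_def
          mat_trunc_def mat_vec3_def)
    moreover have "sym2_vec (\<lambda>i k. f (snd M (b j)) (i, k)) l = mat_vec3 ?R (\<lambda>i. a i j) l"
      using True by (simp add: connection sym2_vec_linear_lincomb[OF basis_of_axioms add scale])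
    ultimately show ?thesis
      using True by (simp add: mat_mult_3 mat_deriv_def mat_vec3_def algebra_simps)
  qed (auto simp: mat_mult_3 mat_deriv_def)
  thus ?thesis by (simp add: gauge_def fun_eq_iff)
qed

lemma sym2_coord_matrix_right_inverse:
  fixes f :: "('i \<Rightarrow> 'a::field) \<Rightarrow> nat \<times> nat \<Rightarrow> 'a"
  assumes B: "basis_of V 3 b" and N: "mdim (fst N) = 2"
    and add: "\<And>x y. x \<in> V \<Longrightarrow> y \<in> V \<Longrightarrow> f (vadd x y) = vadd (f x) (f y)"
    and scale: "\<And>c x. x \<in> V \<Longrightarrow> f (vscale c x) = vscale c (f x)"
    and onto: "fst (sym2_mod d N) \<subseteq> f ` V"
  shows "\<exists>R'. mat_mult 3 (sym2_coord_matrix b f) R' = mat_one 3"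
proof -
  interpret basis_of V 3 b by fact
  define E :: "nat \<Rightarrow> nat \<times> nat \<Rightarrow> 'a"
    where "E k = (\<lambda>(i, j). sym2_mat (\<lambda>l. if l = k then 1 else 0) i j)" for k
  have "E k \<in> f ` V" for k
    using onto by (auto simp: sym2_mod_carrier N E_def sym2_mat_def)
  define x where "x k = inv_into V f (E k)" for k
  have x: "x k \<in> V" "f (x k) = E k" for k
    using \<open>E k \<in> f ` V\<close> unfolding x_def by (rule inv_into_into, rule f_inv_into_f)
  define R' where "R' = mat_trunc 3 (\<lambda>i k. coords 3 b (x k) i)"
  have "mat_mult 3 (sym2_coord_matrix b f) R' l k = mat_one 3 l k" for l k
  proof (cases "l < 3 \<and> k < 3")
    case True
    have "sym2_vec (\<lambda>i j. f (x k) (i, j)) l = mat_mult 3 (sym2_coord_matrix b f) R' l k"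
      using True sym2_vec_linear_lincomb[OF B add scale, of l "coords 3 b (x k)"]
      by (simp add: lincomb_coords[OF x(1)] mat_mult_3 mat_vec3_def R'_def mat_trunc_def)
    moreover have "sym2_vec (\<lambda>i j. f (x k) (i, j)) l = mat_one 3 l k"
      using True by (simp add: x(2) E_def sym2_vec_sym2_mat mat_one_def)
    ultimately show ?thesis by simp
  qed (auto simp: mat_mult_3 mat_one_def)
  thus ?thesis by (auto simp: fun_eq_iff)
qed

lemma sym2_iso_coords_gauge:
  fixes N :: "(nat, 'a::field) dmodule"
  assumes B: "dmod_basis (fst M) 3 b d (snd M) a" and N: "has_dim (fst N) 2"
    and iso: "dmod_iso M (sym2_mod d N)"
  obtains R R' where "gauge d 3 R a (sym2_conn (cmat N))" "mat_mult 3 R R' = mat_one 3"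
proof -
  interpret dmod_basis "fst M" 3 b d "snd M" a by (fact B)
  have mdN: "mdim (fst N) = 2" using N by (rule mdim_eq)
  obtain f where bij: "bij_betw f (fst M) (fst (sym2_mod d N))"
    and add: "\<And>x y. x \<in> fst M \<Longrightarrow> y \<in> fst M \<Longrightarrow> f (vadd x y) = vadd (f x) (f y)"
    and scale: "\<And>c x. x \<in> fst M \<Longrightarrow> f (vscale c x) = vscale c (f x)"
    and deriv: "\<And>x. x \<in> fst M \<Longrightarrow> f (snd M x) = snd (sym2_mod d N) (f x)"
    using iso unfolding dmod_iso_def by blast
  have "gauge d 3 (sym2_coord_matrix b f) a (sym2_conn (cmat N))"
    using B mdN add scale _ deriv
  proof (rule sym2_coord_matrix_gauge)
    show "f x \<in> fst (sym2_mod d N)" if "x \<in> fst M" for x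
      using bij that by (auto simp: bij_betw_def)
  qed
  moreover obtain R' where "mat_mult 3 (sym2_coord_matrix b f) R' = mat_one 3"
    using sym2_coord_matrix_right_inverse[OF basis_of_axioms mdN add scale] bij
    unfolding bij_betw_def by blast
  ultimately show ?thesis by (rule that)
qed

lemma sym2_det_form_horizontal:
  fixes d :: "'a::field_char_0 \<Rightarrow> 'a"
  assumes "derivation d" "g \<noteq> 0" "d g = mat_trace 2 \<beta> * g"
  shows "sym2_deriv d 3 (sym2_conn \<beta>) (det_form (inverse (g\<^sup>2))) = 0"
proof -
  interpret derivation d by fact
  have "d (g\<^sup>2) = 2 * mat_trace 2 \<beta> * g\<^sup>2"
    by (simp add: power2_eq_square d_mult assms(3) algebra_simps)
  hence "d (inverse (g\<^sup>2)) = - 2 * mat_trace 2 \<beta> * inverse (g\<^sup>2)"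
    unfolding d_inverse using assms(2) by (simp add: field_simps power2_eq_square)
  thus ?thesis by (rule sym2_deriv_det_form[OF assms(1)])
qed

lemma (in derivation) horizontal_gauge_transfer:
  assumes "gauge d n R a \<alpha>" "mat_mult n R R' = mat_one n" "mat_mult n R' R = mat_one n"
    and "S \<noteq> 0" "mat_trunc n S = S" "mat_transpose S = S" "sym2_deriv d n \<alpha> S = 0"
  shows "\<exists>S'. S' \<noteq> 0 \<and> mat_trunc n S' = S' \<and> mat_transpose S' = S' \<and> sym2_deriv d n a S' = 0"
proof (intro exI conjI)
  let ?S' = "mat_mult n (mat_mult n R' S) (mat_transpose R')"
  show "sym2_deriv d n a ?S' = 0"
    using sym2_deriv_gauge[OF gauge_inverse[OF assms(2,3,1)], of S] assms(7) by simp
  show "?S' \<noteq> 0"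
    using mat_congruence_inverse[OF assms(2), of S] assms(4,5) by auto
  show "mat_trunc n ?S' = ?S'" by simp
  show "mat_transpose ?S' = ?S'" using assms(6) by (simp add: mat_congruence_transpose)
qed

lemma sym2_iso_horizontal:
  fixes d :: "'a::field_char_0 \<Rightarrow> 'a" and N :: "(nat, 'a) dmodule"
  assumes B: "dmod_basis (fst M) 3 b d (snd M) a" and N: "has_dim (fst N) 2"
    and det_N: "dmod_iso (det_mod d N) (triv_mod d)" and iso: "dmod_iso M (sym2_mod d N)"
  shows "\<exists>S. S \<noteq> 0 \<and> mat_trunc 3 S = S \<and> mat_transpose S = S \<and> sym2_deriv d 3 a S = 0"
proof -
  interpret dmod_basis "fst M" 3 b d "snd M" a by (fact B)
  obtain R R' where R: "gauge d 3 R a (sym2_conn (cmat N))" and RR': "mat_mult 3 R R' = mat_one 3"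
    using sym2_iso_coords_gauge[OF B N iso] .
  obtain g where g: "g \<noteq> 0" "d g = mat_trace 2 (cmat N) * g"
    using det_mod_iso_trivE[OF det_N] by (metis mdim_eq[OF N])
  show ?thesis
  proof (rule horizontal_gauge_transfer[OF R RR' mat3_left_inverse_of_right_inverse[OF RR']])
    show "det_form (inverse (g\<^sup>2)) \<noteq> 0" using g(1) by (simp add: det_form_nonzero)
    show "sym2_deriv d 3 (sym2_conn (cmat N)) (det_form (inverse (g\<^sup>2))) = 0"
      using derivation_axioms g by (rule sym2_det_form_horizontal)
  qed (simp_all add: mat_trunc_det_form mat_transpose_det_form)
qed

section \<open>A horizontal form exhibits a symmetric square\<close>

context derivation
begin

lemma horizontal_mat_vec3:
  assumes "sym2_deriv d 3 a S = 0" "i < 3"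
  shows "d (mat_vec3 S v i) + (\<Sum>j<3. a i j * mat_vec3 S v j)
           = mat_vec3 S (\<lambda>k. d (v k) - (a 0 k * v 0 + a 1 k * v 1 + a 2 k * v 2)) i"
  unfolding mat_vec3_def sum_lessThan_3
  by (simp add: d_simps horizontal_entry[OF assms(1) assms(2)] algebra_simps)

end

text \<open>The image of S, viewed as a map from the dual of M to M, in terms of the basis b.\<close>

definition form_image :: "'a::comm_ring_1 mat \<Rightarrow> (nat \<Rightarrow> 'i \<Rightarrow> 'a) \<Rightarrow> ('i \<Rightarrow> 'a) set" where
  "form_image S b = {lincomb (mat_vec3 S v) b 3 | v. True}"

lemma subspace_of_form_image:
  assumes "basis_of V 3 b"
  shows "subspace_of (form_image S b) V"
  unfolding subspace_of_def
proof (intro conjI ballI allI)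
  interpret basis_of V 3 b by fact
  show "form_image S b \<subseteq> V" using lincomb_in by (auto simp: form_image_def)
  have "vzero = lincomb (mat_vec3 S (\<lambda>_. 0)) b 3" by (simp add: mat_vec3_def lincomb_zero)
  thus "vzero \<in> form_image S b" by (auto simp: form_image_def)
next
  fix u v assume "u \<in> form_image S b" "v \<in> form_image S b"
  then obtain x y where "u = lincomb (mat_vec3 S x) b 3" "v = lincomb (mat_vec3 S y) b 3"
    by (auto simp: form_image_def)
  hence "vadd u v = lincomb (mat_vec3 S (\<lambda>i. x i + y i)) b 3"
    by (simp only: mat_vec3_add lincomb_add)
  thus "vadd u v \<in> form_image S b" by (auto simp: form_image_def)
next
  fix c v assume "v \<in> form_image S b"
  then obtain x where "v = lincomb (mat_vec3 S x) b 3" by (auto simp: form_image_def)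
  hence "vscale c v = lincomb (mat_vec3 S (\<lambda>i. c * x i)) b 3"
    by (simp add: mat_vec3_scale lincomb_scale)
  thus "vscale c v \<in> form_image S b" by (auto simp: form_image_def)
qed

lemma form_image_stable:
  assumes "dmod_basis V 3 b d D a" "sym2_deriv d 3 a S = 0" "x \<in> form_image S b"
  shows "D x \<in> form_image S b"
proof -
  interpret dmod_basis V 3 b d D a by fact
  obtain v where x: "x = lincomb (mat_vec3 S v) b 3" using assms(3) by (auto simp: form_image_def)
  show ?thesis
    unfolding x D_lincomb using horizontal_mat_vec3[OF assms(2)]
    by (auto simp: form_image_def cong: lincomb_cong)
qed

lemma form_image_nontrivial:
  assumes "basis_of V 3 b" "mat_trunc 3 S = S" "S \<noteq> 0"
  shows "form_image S b \<noteq> {vzero}"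
proof
  interpret basis_of V 3 b by fact
  assume "form_image S b = {vzero}"
  hence "lincomb (mat_vec3 S (\<lambda>i. if i = j then 1 else 0)) b 3 = 0" for j
    by (auto simp: form_image_def vzero_eq_zero)
  hence "mat_vec3 S (\<lambda>i. if i = j then 1 else 0) i = 0" if "i < 3" for i j
    using lincomb_eq_zero that by blast
  moreover have "mat_vec3 S (\<lambda>i. if i = j then 1 else 0) i = S i j" if "j < 3" for i j
    using that by (auto simp: mat_vec3_def dest: less_3_cases)
  ultimately have "S i j = 0" for i j
    using fun_cong[OF fun_cong[OF assms(2), of i], of j] by (metis mat_trunc_def)
  with \<open>S \<noteq> 0\<close> show False by (auto simp: fun_eq_iff)
qed

lemma right_inverse_of_form_image:
  assumes "basis_of V 3 b" "form_image S b = V"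
  shows "\<exists>T. mat_mult 3 S T = mat_one 3"
proof -
  interpret basis_of V 3 b by fact
  have ex: "\<exists>v. b k = lincomb (mat_vec3 S v) b 3" if "k < 3" for k
    using basis_in[OF that] assms(2) by (auto simp: form_image_def)
  define T where "T = (\<lambda>i k. (SOME v. b k = lincomb (mat_vec3 S v) b 3) i)"
  have "mat_mult 3 S T i k = mat_one 3 i k" for i k
  proof (cases "i < 3 \<and> k < 3")
    case True
    have "lincomb (\<lambda>i. if i = k then 1 else 0) b 3 = lincomb (mat_vec3 S (\<lambda>i. T i k)) b 3"
      using True someI_ex[OF ex] lincomb_delta[of k 3 b] by (simp add: T_def)
    from lincomb_inj[OF this, of i] True show ?thesis
      by (simp add: mat_mult_3 mat_vec3_def mat_one_def)
  qed (auto simp: mat_mult_3 mat_one_def)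
  thus ?thesis by (auto simp: fun_eq_iff)
qed

lemma horizontal_invertible:
  assumes B: "dmod_basis (fst M) 3 b d (snd M) a" and irr: "irreducible_dmod d M"
    and "sym2_deriv d 3 a S = 0" "mat_trunc 3 S = S" "S \<noteq> 0"
  shows "\<exists>T. mat_mult 3 S T = mat_one 3"
proof -
  have b: "basis_of (fst M) 3 b" using B by (rule dmod_basis.axioms(1))
  have "form_image S b = {vzero} \<or> form_image S b = fst M"
    using irr subspace_of_form_image[OF b] form_image_stable[OF B assms(3)]
    by (auto simp: irreducible_dmod_def)
  thus ?thesis
    using form_image_nontrivial[OF b assms(4,5)] right_inverse_of_form_image[OF b] by blast
qed

lemma horizontal_normal_form:
  fixes d :: "'a::field_char_0 \<Rightarrow> 'a"
  assumes "derivation d" and C1: "C1_field TYPE('a)"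
    and hor: "sym2_deriv d 3 a S = 0" and S_sym: "mat_transpose S = S"
    and inv: "mat_mult 3 S T = mat_one 3"
    and g: "g \<noteq> 0" "d g = mat_trace 3 a * g"
  obtains Q P \<mu> where "mat_mult 3 Q P = mat_one 3" "mat_mult 3 P Q = mat_one 3" "\<mu> \<noteq> 0" "d \<mu> = 0"
    "mat_mult 3 (mat_mult 3 Q S) (mat_transpose Q) = det_form \<mu>"
proof -
  interpret derivation d by fact
  let ?B = "\<lambda>x y. dot3 x (mat_vec3 S y)"
  obtain q where q: "\<exists>i<3. q i \<noteq> 0" "?B q q = 0"
    using C1_ternary_form_isotropic[OF C1] by blast
  obtain p r where pp: "?B p p = 0" and qp: "?B q p = 1" "?B p q = 1"
    and r: "?B r q = 0" "?B r p = 0" "?B q r = 0" "?B p r = 0"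
    and det: "det3 (rows3 q r p) = 1" and rr: "?B r r = - det3 S"
    using isotropic_frame[OF S_sym inv q] .
  define \<mu> where "\<mu> = 2 * det3 S * g\<^sup>2"
  have "\<mu> \<noteq> 0"
    using det3_nonzero_of_right_inverse[OF inv] g(1) by (simp add: \<mu>_def)
  have "d \<mu> = 0"
    unfolding \<mu>_def power2_eq_square
    by (simp add: d_mult d_numeral d_det3_horizontal[OF hor] g(2) algebra_simps)
  define Q where "Q = rows3 (\<lambda>i. \<mu> * q i) (\<lambda>i. g * r i) p"
  have "g * (g * ?B r r) = - (\<mu> / 2)"
    using rr by (simp add: \<mu>_def power2_eq_square algebra_simps)
  hence QSQ: "mat_mult 3 (mat_mult 3 Q S) (mat_transpose Q) = det_form \<mu>"
    unfolding Q_def by (rule congruence_frame_det_form[OF q(2) pp qp r])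
  have "det3 Q \<noteq> 0"
    using \<open>\<mu> \<noteq> 0\<close> g(1) det by (simp add: Q_def det3_rows3_scale)
  then obtain P where "mat_mult 3 Q P = mat_one 3" "mat_mult 3 P Q = mat_one 3"
    by (rule mat3_invertible_of_det)
  with \<open>\<mu> \<noteq> 0\<close> \<open>d \<mu> = 0\<close> QSQ that show ?thesis by blast
qed

lemma dmod_iso_sym2I:
  fixes L :: "(nat \<Rightarrow> 'a::field) \<Rightarrow> 'a mat" and N :: "(nat, 'a) dmodule"
  assumes B: "dmod_basis (fst M) 3 b d (snd M) a" and N: "mdim (fst N) = 2"
    and cong: "\<And>c c'. (\<And>k. k < 3 \<Longrightarrow> c k = c' k) \<Longrightarrow> L c = L c'"
    and add: "\<And>c c'. L (\<lambda>k. c k + c' k) = L c + L c'"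
    and scale: "\<And>s c. L (\<lambda>k. s * c k) = mat_scale s (L c)"
    and deriv: "\<And>c. L (\<lambda>k. d (c k) + (\<Sum>j<3. a k j * c j)) = sym2_deriv d 2 (cmat N) (L c)"
    and inj: "\<And>c c' k. L c = L c' \<Longrightarrow> k < 3 \<Longrightarrow> c k = c' k"
    and L_sym: "\<And>c. mat_transpose (L c) = L c" and L_trunc: "\<And>c. mat_trunc 2 (L c) = L c"
    and surj: "\<And>U. mat_transpose U = U \<Longrightarrow> mat_trunc 2 U = U \<Longrightarrow> \<exists>c. L c = U"
  shows "dmod_iso M (sym2_mod d N)"
proof -
  interpret dmod_basis "fst M" 3 b d "snd M" a by (fact B)
  define \<Psi> where "\<Psi> x = (\<lambda>(i, j). L (coords 3 b x) i j)" for x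
  have \<Psi>_curry: "(\<lambda>i j. \<Psi> x (i, j)) = L (coords 3 b x)" for x
    by (simp add: \<Psi>_def)
  have "\<Psi> x \<in> fst (sym2_mod d N)" for x
    using fun_cong[OF fun_cong[OF L_sym]] fun_cong[OF fun_cong[OF L_trunc]]
    by (simp add: sym2_mod_carrier N \<Psi>_def mat_transpose_def mat_trunc_def) (metis not_le)
  moreover have "U \<in> \<Psi> ` fst M" if "U \<in> fst (sym2_mod d N)" for U
  proof -
    define U' where "U' = (\<lambda>i j. U (i, j))"
    have "mat_transpose U' = U'" "mat_trunc 2 U' = U'"
      using that
      by (auto simp: sym2_mod_carrier N U'_def mat_transpose_def mat_trunc_def fun_eq_iff)
        (metis not_le)
    then obtain c where "L c = U'" using surj by blast
    hence "\<Psi> (lincomb c b 3) = U"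
      using cong[of "coords 3 b (lincomb c b 3)" c] by (simp add: coords_lincomb \<Psi>_def U'_def)
    thus ?thesis using lincomb_in by blast
  qed
  moreover have "inj_on \<Psi> (fst M)"
  proof (rule inj_onI)
    fix x y assume "x \<in> fst M" "y \<in> fst M" "\<Psi> x = \<Psi> y"
    thus "x = y" using inj \<Psi>_curry by (metis coords_inj)
  qed
  moreover have "\<Psi> (vadd x y) = vadd (\<Psi> x) (\<Psi> y)" if "x \<in> fst M" "y \<in> fst M" for x y
    using cong[of "coords 3 b (vadd x y)"] add coords_add[OF that]
    by (simp add: \<Psi>_def vadd_def fun_eq_iff)
  moreover have "\<Psi> (vscale s x) = vscale s (\<Psi> x)" if "x \<in> fst M" for s x
    using cong[of "coords 3 b (vscale s x)"] scale coords_scale[OF that]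
    by (simp add: \<Psi>_def vscale_def mat_scale_def fun_eq_iff)
  moreover have "\<Psi> (snd M x) = snd (sym2_mod d N) (\<Psi> x)" if "x \<in> fst M" for x
    using cong[of "coords 3 b (snd M x)"] deriv coords_D[OF that]
    by (simp add: \<Psi>_def sym2_mod_deriv N \<Psi>_curry fun_eq_iff)
  ultimately show ?thesis
    unfolding dmod_iso_def bij_betw_def by blast
qed

definition sym2_coord_map :: "'a::comm_ring_1 mat \<Rightarrow> 'a mat \<Rightarrow> (nat \<Rightarrow> 'a) \<Rightarrow> 'a mat" where
  "sym2_coord_map P Q c = mat_mult 2 (mat_mult 2 P (sym2_mat (mat_vec3 Q c))) (mat_transpose P)"

lemma sym2_coord_map_inj:
  assumes "mat_mult 2 Q2 P2 = mat_one 2" "mat_mult 3 P Q = mat_one 3"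
    and "sym2_coord_map P2 Q c = sym2_coord_map P2 Q c'" "k < 3"
  shows "c k = c' k"
proof -
  have "sym2_mat (mat_vec3 Q c) = sym2_mat (mat_vec3 Q c')"
    using arg_cong[OF assms(3), of "\<lambda>U. mat_mult 2 (mat_mult 2 Q2 U) (mat_transpose Q2)"]
    by (simp add: sym2_coord_map_def mat_congruence_inverse[OF assms(1)] mat_trunc_sym2_mat)
  hence "mat_vec3 Q c i = mat_vec3 Q c' i" if "i < 3" for i
    using that by (rule sym2_mat_inj)
  hence "mat_vec3 P (mat_vec3 Q c) k = mat_vec3 P (mat_vec3 Q c') k"
    by (simp add: mat_vec3_def)
  thus ?thesis using mat_vec3_inverse[OF assms(2,4)] by simp
qed

lemma sym2_coord_map_surj:
  assumes "mat_mult 2 P2 Q2 = mat_one 2" "mat_mult 3 Q P = mat_one 3"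
    and "mat_transpose U = U" "mat_trunc 2 U = U"
  shows "\<exists>c. sym2_coord_map P2 Q c = U"
proof
  define V where "V = mat_mult 2 (mat_mult 2 Q2 U) (mat_transpose Q2)"
  have "mat_transpose V = V" using assms(3) by (simp add: V_def mat_congruence_transpose)
  have "sym2_mat (mat_vec3 Q (mat_vec3 P (sym2_vec V))) = sym2_mat (sym2_vec V)"
    by (rule sym2_mat_cong) (simp add: mat_vec3_inverse[OF assms(2)])
  also have "\<dots> = V"
    using \<open>mat_transpose V = V\<close> by (simp add: sym2_mat_sym2_vec V_def)
  finally show "sym2_coord_map P2 Q (mat_vec3 P (sym2_vec V)) = U"
    using assms(4) by (simp add: sym2_coord_map_def V_def mat_congruence_inverse[OF assms(1)])
qed

lemma (in derivation) sym2_coord_map_deriv: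
  assumes "gauge d 2 P2 C \<beta>" "gauge d 3 Q a (sym2_conn C)"
  shows "sym2_coord_map P2 Q (\<lambda>k. d (c k) + (\<Sum>j<3. a k j * c j))
           = sym2_deriv d 2 \<beta> (sym2_coord_map P2 Q c)"
proof -
  have "sym2_mat (mat_vec3 Q (\<lambda>k. d (c k) + (\<Sum>j<3. a k j * c j)))
          = sym2_mat (\<lambda>i. d (mat_vec3 Q c i) + mat_vec3 (sym2_conn C) (mat_vec3 Q c) i)"
    by (rule sym2_mat_cong) (simp add: gauge_mat_vec3[OF assms(2)])
  thus ?thesis
    by (simp add: sym2_coord_map_def sym2_deriv_gauge[OF assms(1)] flip: sym2_deriv_sym2_mat)
qed

lemma sym2_iso_of_gauge:
  assumes "derivation d" and B: "dmod_basis (fst M) 3 b d (snd M) a"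
    and QP: "mat_mult 3 Q P = mat_one 3" and PQ: "mat_mult 3 P Q = mat_one 3"
    and gauge: "gauge d 3 Q a (sym2_conn C)" and tr: "mat_trace 2 C = 0"
  shows "\<exists>N :: (nat, 'a::field) dmodule. dmod d N \<and> has_dim (fst N) 2
           \<and> dmod_iso (det_mod d N) (triv_mod d) \<and> dmod_iso M (sym2_mod d N)"
proof -
  interpret derivation d by fact
  define N where "N = std2_mod d C"
  obtain P2 Q2 where P2Q2: "mat_mult 2 P2 Q2 = mat_one 2" and Q2P2: "mat_mult 2 Q2 P2 = mat_one 2"
    and P2: "gauge d 2 P2 C (cmat N)"
    using std2_mod_cbasis_change[OF assms(1)] unfolding N_def by metis
  have "mdim (fst N) = 2"
    unfolding N_def using has_dim_std2_mod[OF assms(1)] by (rule mdim_eq)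
  hence "dmod_iso M (sym2_mod d N)"
  proof (rule dmod_iso_sym2I[OF B _, where L = "sym2_coord_map P2 Q"])
    show "sym2_coord_map P2 Q c = sym2_coord_map P2 Q c'" if "\<And>k. k < 3 \<Longrightarrow> c k = c' k" for c c'
      using that by (simp add: sym2_coord_map_def mat_vec3_def)
    show "sym2_coord_map P2 Q (\<lambda>k. c k + c' k) = sym2_coord_map P2 Q c + sym2_coord_map P2 Q c'"
      for c c'
      by (simp add: sym2_coord_map_def mat_vec3_add sym2_mat_add mat_mult_add_left
          mat_mult_add_right)
    show "sym2_coord_map P2 Q (\<lambda>k. s * c k) = mat_scale s (sym2_coord_map P2 Q c)" for s c
      by (simp add: sym2_coord_map_def mat_vec3_scale sym2_mat_scale mat_mult_scale_left
          mat_mult_scale_right)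
    show "mat_transpose (sym2_coord_map P2 Q c) = sym2_coord_map P2 Q c" for c
      by (simp add: sym2_coord_map_def mat_congruence_transpose mat_transpose_sym2_mat)
    show "mat_trunc 2 (sym2_coord_map P2 Q c) = sym2_coord_map P2 Q c" for c
      by (simp add: sym2_coord_map_def)
  qed (use sym2_coord_map_deriv[OF P2 gauge] sym2_coord_map_inj[OF Q2P2 PQ]
         sym2_coord_map_surj[OF P2Q2 QP] in auto)
  thus ?thesis
    using dmod_std2_mod[OF assms(1)] has_dim_std2_mod[OF assms(1)] det_mod_std2_mod[OF assms(1) tr]
    by (intro exI[of _ N]) (simp add: N_def)
qed

lemma sym2_root_of_horizontal:
  fixes d :: "'a::field_char_0 \<Rightarrow> 'a"
  assumes "derivation d" "C1_field TYPE('a)"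
    and B: "dmod_basis (fst M) 3 b d (snd M) a" and irr: "irreducible_dmod d M"
    and g: "g \<noteq> 0" "d g = mat_trace 3 a * g"
    and S: "S \<noteq> 0" "mat_trunc 3 S = S" "mat_transpose S = S" "sym2_deriv d 3 a S = 0"
  shows "\<exists>N :: (nat, 'a) dmodule. dmod d N \<and> has_dim (fst N) 2
           \<and> dmod_iso (det_mod d N) (triv_mod d) \<and> dmod_iso M (sym2_mod d N)"
proof -
  interpret derivation d by fact
  obtain T where "mat_mult 3 S T = mat_one 3"
    using horizontal_invertible[OF B irr S(4,2,1)] by blast
  then obtain Q P \<mu> where QP: "mat_mult 3 Q P = mat_one 3" and PQ: "mat_mult 3 P Q = mat_one 3"
    and \<mu>: "\<mu> \<noteq> 0" "d \<mu> = 0" and QSQ: "mat_mult 3 (mat_mult 3 Q S) (mat_transpose Q) = det_form \<mu>"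
    using horizontal_normal_form[OF assms(1,2) S(4,3) _ g] by metis
  define A where "A = mat_mult 3 (mat_mult 3 Q a - mat_deriv d 3 Q) P"
  have gauge: "gauge d 3 Q a A" unfolding A_def by (rule gauge_transform[OF PQ])
  have "sym2_deriv d 3 A (det_form \<mu>) = 0"
    using sym2_deriv_gauge[OF gauge, of S] by (simp add: QSQ S(4))
  hence "mat_trunc 3 A = sym2_conn (sym2_root A)"
    using \<mu>(2,1) by (rule sym2_conn_sym2_root[OF assms(1)])
  hence "gauge d 3 Q a (sym2_conn (sym2_root A))"
    using gauge by (metis gauge_def mat_mult_trunc_left)
  thus ?thesis by (rule sym2_iso_of_gauge[OF assms(1) B QP PQ _ mat_trace_sym2_root])
qed

theorem corollary2p2:
  fixes d :: "'a::field_char_0 \<Rightarrow> 'a" and M :: "('i, 'a) dmodule"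
  assumes "diff_field d"
    and "C1_field TYPE('a)"
    and "dmod d M"
    and "irreducible_dmod d M"
    and "has_dim (fst M) 3"
    and "dmod_iso (det_mod d M) (triv_mod d)"
  shows "(\<exists>N :: (nat, 'a) dmodule. dmod d N \<and> has_dim (fst N) 2
            \<and> dmod_iso (det_mod d N) (triv_mod d) \<and> dmod_iso M (sym2_mod d N))
         \<longleftrightarrow> (\<exists>F\<in>fst (sym2_mod d M). F \<noteq> vzero \<and> snd (sym2_mod d M) F = vzero)"
proof -
  have d: "derivation d" using assms(1) by (rule derivation.intro)
  have B: "dmod_basis (fst M) 3 (cbasis M) d (snd M) (cmat M)"
    using d assms(3,5) by (rule dmod_basis_cbasis)
  have dim: "mdim (fst M) = 3" using assms(5) by (rule mdim_eq)
  obtain g where g: "g \<noteq> 0" "d g = mat_trace 3 (cmat M) * g"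
    using derivation.det_mod_iso_trivE[OF d assms(6)] by (metis dim)
  show ?thesis
    unfolding sym2_mod_horizontal_iff[OF dim]
    using sym2_iso_horizontal[OF B] sym2_root_of_horizontal[OF d assms(2) B assms(4) g] by blast
qed
end
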